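(* Let $G={\rm Spin}_{2r}$ ($r\ge4$), with $\Delta$ of type $D_r$, and $S_1=\{\alpha_1\}$. Then $$\mathcal P_{G,S_1}(X)=\frac{(X-1)\big((2r-1)X+(r-1)(2r-3)\big)}{|W|}\prod_{a=1}^{r-2}(X+2a-1)\in\mathbb Q[X],$$ where $|W|=2^{r-1}r!$.
   Context: $W$ is the Weyl group of type $D_r$ with simple roots $\alpha_1,\dots,\alpha_r$ in Bourbaki labelling. $d(w)$ is the dimension of the fixed space of $w$ on the reflection representation. ${\rm Desc}_L(w)=\{\alpha:l(s_\alpha w)<l(w)\}$, $\mathcal C_S=\{w:{\rm Desc}_L(w)=S\}$, $\sigma_S$ the direct sum of Kazhdan–Lusztig right cell representations of right cells contained in $\mathcal C_S$ (for $S=S_1$ one has $\sigma_{S_1}={\rm Ind}_{W(\Delta\setminus S_1)}^W\mathbf 1-\mathbf 1_W$ in the Grothendieck group), and $\mathcal P_{G,S}(X)=\frac1{|W|}\sum_{w\in W}\chi_{\sigma_S}(w)X^{d(w)}$. *)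

theory Defs
  imports "Jordan_Normal_Form.Matrix_Kernel" "HOL-Computational_Algebra.Polynomial"
begin

text \<open>Reflection representation of the Weyl group of type D_r on R^r,
  coordinates e_0,...,e_(r-1).  Bourbaki simple roots:
  alpha_k = e_(k-1) - e_k for 1 <= k <= r-1, and alpha_r = e_(r-2) + e_(r-1).\<close>

definition simple_root_D :: "nat \<Rightarrow> nat \<Rightarrow> real vec" where
  "simple_root_D r k =
     (if k < r then vec r (\<lambda>i. if i = k - 1 then 1 else if i = k then -1 else 0)
      else vec r (\<lambda>i. if i = r - 2 \<or> i = r - 1 then 1 else 0))"

definition reflection_mat :: "nat \<Rightarrow> real vec \<Rightarrow> real mat" where
  "reflection_mat r a =
     mat r r (\<lambda>(i,j). (if i = j then 1 else 0) - 2 * (a $ i) * (a $ j) / (a \<bullet> a))"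

inductive_set refl_group :: "nat \<Rightarrow> nat set \<Rightarrow> real mat set" for r S where
  one: "1\<^sub>m r \<in> refl_group r S"
| step: "w \<in> refl_group r S \<Longrightarrow> k \<in> S \<Longrightarrow>
           reflection_mat r (simple_root_D r k) * w \<in> refl_group r S"

definition weyl_D :: "nat \<Rightarrow> real mat set" where
  "weyl_D r = refl_group r {1..r}"

definition parabolic_D1 :: "nat \<Rightarrow> real mat set" where
  "parabolic_D1 r = refl_group r {2..r}"

definition fixdim :: "nat \<Rightarrow> real mat \<Rightarrow> nat" where
  "fixdim r w = kernel_dim (w - 1\<^sub>m r)"

definition left_cosets_D1 :: "nat \<Rightarrow> real mat set set" where
  "left_cosets_D1 r = {(\<lambda>h. g * h) ` parabolic_D1 r | g. g \<in> weyl_D r}"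

text \<open>Character of sigma_(S_1) = Ind_(W(Delta - S_1))^W 1 - 1_W.\<close>
definition chi_sigma_S1 :: "nat \<Rightarrow> real mat \<Rightarrow> int" where
  "chi_sigma_S1 r w =
     int (card {C \<in> left_cosets_D1 r. (\<lambda>h. w * h) ` C = C}) - 1"

definition P_S1 :: "nat \<Rightarrow> rat poly" where
  "P_S1 r = Polynomial.smult (1 / of_nat (card (weyl_D r)))
     (\<Sum>w\<in>weyl_D r. Polynomial.smult (of_int (chi_sigma_S1 r w)) (monom 1 (fixdim r w)))"

end

theory Submission
  imports Defs "HOL-Combinatorics.Permutations"
begin

text \<open>The Weyl group of type D_r acts on the coordinate space as the even signed permutations,
  and the left cosets of W(\<Delta> - {\<alpha>_1}) correspond to the 2r signed axes \<plusminus>e_i, so the character of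
  \<sigma>_(S_1) at w is 2 f(w) - 1, where f(w) counts the basis vectors fixed by w. Every signed
  permutation of rank n + 1 arises from one of rank n by keeping e_n, negating it, or swapping it
  with some \<plusminus>e_j; these operations change the fixed-space dimension by 1, 0 and 0 respectively.
  This gives first-order recurrences for the generating polynomials \<Sum> X^d(w), \<Sum> \<epsilon>(w) X^d(w),
  \<Sum> f(w) X^d(w) and \<Sum> \<epsilon>(w) f(w) X^d(w) over all signed permutations (\<epsilon> the product of the signs),
  whose solutions are products of linear factors. Averaging over \<epsilon> = \<plusminus>1 restricts the sums to W.\<close>

section \<open>Signed permutations\<close>

type_synonym signed_perm = "(nat \<Rightarrow> nat) \<times> (nat \<Rightarrow> real)"

text \<open>A pair (p, s) encodes the signed permutation e_k \<mapsto> s k \<cdot> e_(p k) of the standard basis.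
  Elements of sperms n act trivially outside {..<n}, so sperms n \<subseteq> sperms (Suc n).\<close>

definition sperms :: "nat \<Rightarrow> signed_perm set" where
  "sperms n = {x. fst x permutes {..<n} \<and> (\<forall>i. snd x i = 1 \<or> snd x i = -1) \<and> (\<forall>i\<ge>n. snd x i = 1)}"

definition sperm_mat :: "nat \<Rightarrow> signed_perm \<Rightarrow> real mat" where
  "sperm_mat n x = mat n n (\<lambda>(i,k). if i = fst x k then snd x k else 0)"

definition sperm_mult :: "signed_perm \<Rightarrow> signed_perm \<Rightarrow> signed_perm" where
  "sperm_mult x y = (fst x \<circ> fst y, \<lambda>k. snd x (fst y k) * snd y k)"

definition sperm_one :: signed_perm where
  "sperm_one = (id, \<lambda>_. 1)"

definition sperm_inv :: "signed_perm \<Rightarrow> signed_perm" where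
  "sperm_inv x = (inv_into UNIV (fst x), \<lambda>j. snd x (inv_into UNIV (fst x) j))"

lemma sperms_D:
  assumes "x \<in> sperms n"
  shows "fst x permutes {..<n}" "snd x i = 1 \<or> snd x i = -1" "i \<ge> n \<Longrightarrow> snd x i = 1"
    "i \<ge> n \<Longrightarrow> fst x i = i" "i < n \<Longrightarrow> fst x i < n" "snd x i * snd x i = 1" "snd x i \<noteq> 0"
proof -
  show p: "fst x permutes {..<n}" and s: "snd x i = 1 \<or> snd x i = -1"
    using assms unfolding sperms_def by auto
  show "i \<ge> n \<Longrightarrow> snd x i = 1" using assms unfolding sperms_def by auto
  show "i \<ge> n \<Longrightarrow> fst x i = i" using permutes_not_in[OF p] by simp
  show "i < n \<Longrightarrow> fst x i < n" using permutes_in_image[OF p] by simp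
  show "snd x i * snd x i = 1" "snd x i \<noteq> 0" using s by auto
qed

lemma sperms_fixes_bound: "x \<in> sperms n \<Longrightarrow> fst x n = n \<and> snd x n = 1"
  using sperms_D(3,4) by auto

lemma sperm_one_in_sperms [simp]: "sperm_one \<in> sperms n"
  unfolding sperm_one_def sperms_def by (auto simp: permutes_id)

lemma sperm_mult_in_sperms:
  assumes x: "x \<in> sperms n" and y: "y \<in> sperms n"
  shows "sperm_mult x y \<in> sperms n"
proof -
  have "fst (sperm_mult x y) permutes {..<n}" unfolding sperm_mult_def
    using permutes_compose[OF sperms_D(1)[OF y] sperms_D(1)[OF x]] by simp
  moreover have "snd (sperm_mult x y) i = 1 \<or> snd (sperm_mult x y) i = -1" for i
    using sperms_D(2)[OF x, of "fst y i"] sperms_D(2)[OF y, of i] unfolding sperm_mult_def by auto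
  moreover have "i \<ge> n \<Longrightarrow> snd (sperm_mult x y) i = 1" for i
    using sperms_D(3,4)[OF x] sperms_D(3,4)[OF y] unfolding sperm_mult_def by auto
  ultimately show ?thesis unfolding sperms_def by auto
qed

lemma sperm_inv_in_sperms:
  assumes x: "x \<in> sperms n"
  shows "sperm_inv x \<in> sperms n"
proof -
  have ip: "inv_into UNIV (fst x) permutes {..<n}" using permutes_inv[OF sperms_D(1)[OF x]] .
  show ?thesis unfolding sperms_def sperm_inv_def
    using ip sperms_D(2,3)[OF x] permutes_not_in[OF ip] by auto
qed

lemma sperm_mult_assoc: "sperm_mult (sperm_mult x y) z = sperm_mult x (sperm_mult y z)"
  unfolding sperm_mult_def by (simp add: o_def mult.assoc)

lemma sperm_mult_one [simp]: "sperm_mult sperm_one x = x" "sperm_mult x sperm_one = x"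
  unfolding sperm_mult_def sperm_one_def by simp_all

lemma sperm_mult_inv:
  assumes x: "x \<in> sperms n"
  shows "sperm_mult (sperm_inv x) x = sperm_one" "sperm_mult x (sperm_inv x) = sperm_one"
proof -
  have p: "fst x permutes {..<n}" using sperms_D(1)[OF x] .
  show "sperm_mult (sperm_inv x) x = sperm_one" unfolding sperm_mult_def sperm_inv_def sperm_one_def
    using permutes_inv_o(2)[OF p] permutes_inverses(2)[OF p] sperms_D(6)[OF x] by (auto simp: fun_eq_iff)
  show "sperm_mult x (sperm_inv x) = sperm_one" unfolding sperm_mult_def sperm_inv_def sperm_one_def
    using permutes_inv_o(1)[OF p] sperms_D(6)[OF x] by (auto simp: fun_eq_iff)
qed

lemma sperm_mat_carrier [simp]: "sperm_mat n x \<in> carrier_mat n n"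
  unfolding sperm_mat_def by auto

lemma sperm_mat_dim [simp]: "dim_row (sperm_mat n x) = n" "dim_col (sperm_mat n x) = n"
  unfolding sperm_mat_def by auto

lemma sperm_mat_index [simp]:
  "i < n \<Longrightarrow> k < n \<Longrightarrow> sperm_mat n x $$ (i,k) = (if i = fst x k then snd x k else 0)"
  unfolding sperm_mat_def by auto

lemma sperm_mat_mult:
  assumes x: "x \<in> sperms n" and y: "y \<in> sperms n"
  shows "sperm_mat n x * sperm_mat n y = sperm_mat n (sperm_mult x y)"
proof (rule eq_matI)
  fix i k assume "i < dim_row (sperm_mat n (sperm_mult x y))" "k < dim_col (sperm_mat n (sperm_mult x y))"
  hence i: "i < n" and k: "k < n" by auto
  have "(sperm_mat n x * sperm_mat n y) $$ (i,k) = (\<Sum>l\<in>{0..<n}. sperm_mat n x $$ (i,l) * sperm_mat n y $$ (l,k))"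
    using i k by (simp add: scalar_prod_def)
  also have "\<dots> = (\<Sum>l\<in>{0..<n}. if l = fst y k then (if i = fst x l then snd x l else 0) * snd y k else 0)"
    by (rule sum.cong) (auto simp: i k)
  also have "\<dots> = sperm_mat n (sperm_mult x y) $$ (i,k)"
    using sperms_D(5)[OF y k] i k by (simp add: sperm_mult_def)
  finally show "(sperm_mat n x * sperm_mat n y) $$ (i,k) = sperm_mat n (sperm_mult x y) $$ (i,k)" .
qed auto

lemma sperm_mat_one: "sperm_mat n sperm_one = 1\<^sub>m n"
  by (rule eq_matI) (auto simp: sperm_one_def)

lemma inj_on_sperm_mat: "inj_on (sperm_mat n) (sperms n)"
proof (rule inj_onI)
  fix x y assume x: "x \<in> sperms n" and y: "y \<in> sperms n" and eq: "sperm_mat n x = sperm_mat n y"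
  have "fst x k = fst y k \<and> snd x k = snd y k" for k
  proof (cases "k < n")
    case True
    have "sperm_mat n x $$ (fst x k, k) = sperm_mat n y $$ (fst x k, k)" using eq by simp
    hence "snd x k = (if fst x k = fst y k then snd y k else 0)"
      using True sperms_D(5)[OF x True] by simp
    thus ?thesis using sperms_D(7)[OF x, of k] by (auto split: if_splits)
  next
    case False
    thus ?thesis using sperms_D(3,4)[OF x] sperms_D(3,4)[OF y] by auto
  qed
  thus "x = y" by (simp add: prod_eq_iff fun_eq_iff)
qed

section \<open>Building sperms (Suc n) from sperms n\<close>

definition sperm_neg_last :: "nat \<Rightarrow> signed_perm \<Rightarrow> signed_perm" where
  "sperm_neg_last n x = (fst x, (snd x)(n := -1))"

text \<open>sperm_insert n x j \<sigma> is x composed with the signed transposition e_j \<mapsto> \<sigma> e_n, e_n \<mapsto> \<sigma> e_j.\<close>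

definition sperm_insert :: "nat \<Rightarrow> signed_perm \<Rightarrow> nat \<Rightarrow> real \<Rightarrow> signed_perm" where
  "sperm_insert n x j \<sigma> = (fst x \<circ> transpose j n, (snd x)(j := \<sigma>, n := \<sigma> * snd x j))"

lemma sperms_mono_Suc: "x \<in> sperms n \<Longrightarrow> x \<in> sperms (Suc n)"
  unfolding sperms_def by (auto intro: permutes_subset)

lemma sperm_neg_last_in_sperms: "x \<in> sperms n \<Longrightarrow> sperm_neg_last n x \<in> sperms (Suc n)"
  unfolding sperms_def sperm_neg_last_def by (auto intro: permutes_subset)

lemma sperm_insert_in_sperms:
  assumes x: "x \<in> sperms n" and j: "j < n" and s: "\<sigma> = 1 \<or> \<sigma> = -1"
  shows "sperm_insert n x j \<sigma> \<in> sperms (Suc n)"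
proof -
  have "fst x permutes {..<Suc n}" using sperms_D(1)[OF x] by (rule permutes_subset) auto
  moreover have "transpose j n permutes {..<Suc n}" using j by (intro permutes_swap_id) auto
  ultimately have "fst x \<circ> transpose j n permutes {..<Suc n}" by (rule permutes_compose[rotated])
  moreover have "snd (sperm_insert n x j \<sigma>) i = 1 \<or> snd (sperm_insert n x j \<sigma>) i = -1" for i
    using s sperms_D(2)[OF x, of j] sperms_D(2)[OF x, of i] unfolding sperm_insert_def by auto
  moreover have "i \<ge> Suc n \<Longrightarrow> snd (sperm_insert n x j \<sigma>) i = 1" for i
    using sperms_D(3)[OF x, of i] j unfolding sperm_insert_def by auto
  ultimately show ?thesis unfolding sperms_def sperm_insert_def by auto
qed

lemma sperm_insert_inj:
  assumes x: "x \<in> sperms n" and j: "j < n" and y: "y \<in> sperms n" and k: "k < n"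
    and s: "\<sigma> = 1 \<or> \<sigma> = -1" and eq: "sperm_insert n x j \<sigma> = sperm_insert n y k \<tau>"
  shows "x = y \<and> j = k \<and> \<sigma> = \<tau>"
proof -
  have jk: "j = k"
  proof (rule ccontr)
    assume "j \<noteq> k"
    have "fst (sperm_insert n x j \<sigma>) j = n"
      using sperms_fixes_bound[OF x] unfolding sperm_insert_def by simp
    moreover have "fst (sperm_insert n y k \<tau>) j = fst y j"
      using \<open>j \<noteq> k\<close> j unfolding sperm_insert_def by (simp add: transpose_def)
    ultimately show False using eq sperms_D(5)[OF y j] by simp
  qed
  have st: "\<sigma> = \<tau>"
  proof -
    have "snd (sperm_insert n x j \<sigma>) j = snd (sperm_insert n y k \<tau>) j" using eq by simp
    thus ?thesis using jk j unfolding sperm_insert_def by simp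
  qed
  have f: "fst x = fst y"
  proof
    fix i
    have "fst (sperm_insert n x j \<sigma>) (transpose j n i) = fst (sperm_insert n y j \<sigma>) (transpose j n i)"
      using eq jk st by simp
    thus "fst x i = fst y i" unfolding sperm_insert_def by simp
  qed
  have "snd x i = snd y i" for i
  proof -
    have e: "snd (sperm_insert n x j \<sigma>) i = snd (sperm_insert n y j \<sigma>) i"
      "snd (sperm_insert n x j \<sigma>) n = snd (sperm_insert n y j \<sigma>) n"
      using eq jk st by simp_all
    consider "i = j" | "i = n" | "i \<noteq> j" "i \<noteq> n" by blast
    thus ?thesis
    proof cases
      case 1
      thus ?thesis using e(2) j s unfolding sperm_insert_def by auto
    next
      case 2
      thus ?thesis using sperms_fixes_bound x y by simp
    next
      case 3
      thus ?thesis using e(1) unfolding sperm_insert_def by simp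
    qed
  qed
  thus ?thesis using f jk st by (simp add: prod_eq_iff fun_eq_iff)
qed

lemma sperms_Suc_fixing_last:
  assumes y: "y \<in> sperms (Suc n)" and last: "fst y n = n"
  shows "(fst y, (snd y)(n := 1)) \<in> sperms n"
proof -
  have "fst y permutes {..<n}"
    using permutes_superset[OF sperms_D(1)[OF y]] last by (metis Diff_iff lessThan_iff less_SucE)
  thus ?thesis using y unfolding sperms_def
    by (auto simp: le_less Suc_le_eq) (metis Suc_leI le_neq_implies_less)
qed

lemma sperms_Suc_moving_last:
  assumes y: "y \<in> sperms (Suc n)" and j: "j < n" "fst y j = n"
  shows "\<exists>x\<in>sperms n. y = sperm_insert n x j (snd y j)"
proof
  define p where "p = fst y \<circ> transpose j n"
  define s where "s = (snd y)(j := snd y j * snd y n, n := 1)"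
  have p': "p permutes {..<Suc n}" unfolding p_def
    using j by (intro permutes_compose[OF permutes_swap_id sperms_D(1)[OF y]]) auto
  have p: "p permutes {..<n}"
    using permutes_superset[OF p'] j unfolding p_def by (metis Diff_iff lessThan_iff less_SucE o_apply transpose_eq_iff)
  show "(p, s) \<in> sperms n" unfolding sperms_def
  proof (intro CollectI conjI allI impI; simp only: fst_conv snd_conv)
    show "p permutes {..<n}" by (rule p)
    fix i
    show "s i = 1 \<or> s i = -1" unfolding s_def
      using sperms_D(2)[OF y, of j] sperms_D(2)[OF y, of n] sperms_D(2)[OF y, of i] by auto
    assume "n \<le> i" thus "s i = 1" unfolding s_def using sperms_D(3)[OF y, of i] j by auto
  qed
  show "y = sperm_insert n (p, s) j (snd y j)"
    unfolding sperm_insert_def p_def s_def using j sperms_D(6)[OF y, of j]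
    by (auto simp: prod_eq_iff fun_eq_iff)
qed

lemma sperms_Suc_cases:
  assumes y: "y \<in> sperms (Suc n)"
  obtains "y \<in> sperms n"
  | x where "x \<in> sperms n" "y = sperm_neg_last n x"
  | x j \<sigma> where "x \<in> sperms n" "j < n" "\<sigma> = 1 \<or> \<sigma> = -1" "y = sperm_insert n x j \<sigma>"
proof (cases "fst y n = n")
  case True
  let ?x = "(fst y, (snd y)(n := 1))"
  have x: "?x \<in> sperms n" by (rule sperms_Suc_fixing_last[OF y True])
  consider "snd y n = 1" | "snd y n = -1" using sperms_D(2)[OF y, of n] by blast
  thus ?thesis
  proof cases
    case 1
    hence "y = ?x" by (simp add: prod_eq_iff fun_upd_idem)
    thus ?thesis using that(1) x by simp
  next
    case 2
    hence "y = sperm_neg_last n ?x" unfolding sperm_neg_last_def by (auto simp: prod_eq_iff fun_eq_iff)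
    thus ?thesis using that(2) x by blast
  qed
next
  case False
  obtain j where j: "fst y j = n" using permutes_surj[OF sperms_D(1)[OF y]] by (metis surj_def)
  have "j \<noteq> n" using False j by auto
  hence "j < n" using sperms_D(4)[OF y, of j] j by (metis Suc_leI le_neq_implies_less not_less)
  thus ?thesis using sperms_Suc_moving_last[OF y _ j] that(3) sperms_D(2)[OF y, of j] by blast
qed

lemma sperms_Suc:
  "sperms (Suc n) = sperms n \<union> sperm_neg_last n ` sperms n
     \<union> (\<lambda>(x,j,\<sigma>). sperm_insert n x j \<sigma>) ` (sperms n \<times> {..<n} \<times> {1,-1})"
proof
  show "sperms (Suc n) \<subseteq> sperms n \<union> sperm_neg_last n ` sperms n
     \<union> (\<lambda>(x,j,\<sigma>). sperm_insert n x j \<sigma>) ` (sperms n \<times> {..<n} \<times> {1,-1})"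
  proof
    fix y assume "y \<in> sperms (Suc n)"
    thus "y \<in> sperms n \<union> sperm_neg_last n ` sperms n
     \<union> (\<lambda>(x,j,\<sigma>). sperm_insert n x j \<sigma>) ` (sperms n \<times> {..<n} \<times> {1,-1})"
      by (cases rule: sperms_Suc_cases) force+
  qed
qed (use sperms_mono_Suc sperm_neg_last_in_sperms sperm_insert_in_sperms in auto)

lemma sperms_0: "sperms 0 = {sperm_one}"
proof -
  have "x = sperm_one" if "x \<in> sperms 0" for x
    using sperms_D(3,4)[OF that] unfolding sperm_one_def by (simp add: prod_eq_iff fun_eq_iff)
  thus ?thesis by auto
qed

lemma finite_sperms [simp]: "finite (sperms n)"
proof (induction n)
  case (Suc n)
  have "finite (sperms n \<union> sperm_neg_last n ` sperms n
     \<union> (\<lambda>(x,j,\<sigma>). sperm_insert n x j \<sigma>) ` (sperms n \<times> {..<n} \<times> {1,-1}))"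
    using Suc.IH by simp
  thus ?case by (simp only: sperms_Suc)
qed (simp add: sperms_0)

lemma inj_on_sperm_neg_last: "inj_on (sperm_neg_last n) (sperms n)"
proof (rule inj_onI)
  fix x y assume x: "x \<in> sperms n" and y: "y \<in> sperms n" and eq: "sperm_neg_last n x = sperm_neg_last n y"
  have "snd x i = snd y i" for i
    using fun_cong[OF arg_cong[OF eq, of snd], of i] sperms_fixes_bound[OF x] sperms_fixes_bound[OF y]
    unfolding sperm_neg_last_def by (cases "i = n") auto
  thus "x = y" using eq unfolding sperm_neg_last_def by (simp add: prod_eq_iff fun_eq_iff)
qed

lemma inj_on_sperm_insert:
  "inj_on (\<lambda>(x,j,\<sigma>). sperm_insert n x j \<sigma>) (sperms n \<times> {..<n} \<times> {1,-1})"
proof (rule inj_onI)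
  fix a b assume a: "a \<in> sperms n \<times> {..<n} \<times> {1,-1}" and b: "b \<in> sperms n \<times> {..<n} \<times> {1,-1}"
    and eq: "(\<lambda>(x,j,\<sigma>). sperm_insert n x j \<sigma>) a = (\<lambda>(x,j,\<sigma>). sperm_insert n x j \<sigma>) b"
  obtain x j \<sigma> y k \<tau> where ab: "a = (x, j, \<sigma>)" "b = (y, k, \<tau>)" by (metis prod_cases3)
  have "x \<in> sperms n" "j < n" "\<sigma> = 1 \<or> \<sigma> = -1" "y \<in> sperms n" "k < n"
    and "sperm_insert n x j \<sigma> = sperm_insert n y k \<tau>"
    using a b eq unfolding ab by auto
  thus "a = b" using sperm_insert_inj[of x n j y k \<sigma> \<tau>] unfolding ab by simp
qed

lemma sum_sperms_Suc:
  fixes g :: "signed_perm \<Rightarrow> 'a :: comm_monoid_add"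
  shows "(\<Sum>y\<in>sperms (Suc n). g y) = (\<Sum>x\<in>sperms n. g x + g (sperm_neg_last n x)
           + (\<Sum>j<n. g (sperm_insert n x j 1) + g (sperm_insert n x j (-1))))"
proof -
  let ?A = "sperms n" and ?B = "sperm_neg_last n ` sperms n"
  let ?I = "sperms n \<times> {..<n} \<times> {1::real,-1}"
  let ?C = "(\<lambda>(x,j,\<sigma>). sperm_insert n x j \<sigma>) ` ?I"
  have "snd z n = -1" if "z \<in> ?B" for z using that unfolding sperm_neg_last_def by auto
  moreover have "snd z n = 1" if "z \<in> ?A" for z using that sperms_fixes_bound by blast
  ultimately have dAB: "?A \<inter> ?B = {}" by fastforce
  have "fst z n \<noteq> n" if "z \<in> ?C" for z
  proof -
    obtain x j \<sigma> where "x \<in> sperms n" "j < n" "z = sperm_insert n x j \<sigma>" using \<open>z \<in> ?C\<close> by auto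
    thus ?thesis using sperms_D(5)[of x n j] unfolding sperm_insert_def by simp
  qed
  moreover have "fst z n = n" if "z \<in> ?A \<union> ?B" for z
    using that by (auto simp: sperm_neg_last_def dest: sperms_fixes_bound)
  ultimately have dABC: "(?A \<union> ?B) \<inter> ?C = {}" by blast
  have "(\<Sum>y\<in>sperms (Suc n). g y) = sum g ?A + sum g ?B + sum g ?C"
    unfolding sperms_Suc using dAB dABC by (simp add: sum.union_disjoint)
  also have "sum g ?B = (\<Sum>x\<in>sperms n. g (sperm_neg_last n x))"
    using sum.reindex[OF inj_on_sperm_neg_last] by simp
  also have "sum g ?C = (\<Sum>(x,j,\<sigma>)\<in>?I. g (sperm_insert n x j \<sigma>))"
    using sum.reindex[OF inj_on_sperm_insert] by (simp add: case_prod_unfold)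
  also have "\<dots> = (\<Sum>x\<in>sperms n. \<Sum>j<n. g (sperm_insert n x j 1) + g (sperm_insert n x j (-1)))"
    by (simp add: sum.cartesian_product[symmetric])
  finally show ?thesis by (simp add: sum.distrib)
qed

section \<open>Fixed-space dimension\<close>

definition fix_block :: "nat \<Rightarrow> signed_perm \<Rightarrow> real \<Rightarrow> real mat" where
  "fix_block n x c = four_block_mat (sperm_mat n x - 1\<^sub>m n) (0\<^sub>m n 1) (0\<^sub>m 1 n) (mat 1 1 (\<lambda>_. c))"

lemma fix_block_carrier [simp]: "fix_block n x c \<in> carrier_mat (Suc n) (Suc n)"
  unfolding fix_block_def by (rule four_block_carrier_mat[of _ n n _ 1 1, simplified]) auto

lemma fix_block_dim [simp]: "dim_row (fix_block n x c) = Suc n" "dim_col (fix_block n x c) = Suc n"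
  using fix_block_carrier[of n x c] by (simp_all only: carrier_mat_def mem_Collect_eq)

lemma fix_block_index:
  "i < Suc n \<Longrightarrow> k < Suc n \<Longrightarrow> fix_block n x c $$ (i,k) =
   (if i < n \<and> k < n then (if i = fst x k then snd x k else 0) - (if i = k then 1 else 0)
    else if i = n \<and> k = n then c else 0)"
  unfolding fix_block_def by (auto simp: less_Suc_eq)

lemma kernel_dim_1x1: "kernel.dim 1 (mat 1 1 (\<lambda>_. c :: real)) = (if c = 0 then 1 else 0)"
proof (cases "c = 0")
  case True
  let ?A = "mat 1 1 (\<lambda>_. c :: real)"
  have A: "?A \<in> carrier_mat 1 1" by auto
  have "pivot_fun ?A (\<lambda>_. 1) 1" by (rule pivot_funI) (auto simp: True)
  hence ref: "row_echelon_form ?A" unfolding row_echelon_form_def by auto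
  have "row ?A 0 = 0\<^sub>v 1" using True by (intro eq_vecI) auto
  hence e: "{i. i < 1 \<and> row ?A i \<noteq> 0\<^sub>v 1} = {}" by auto
  show ?thesis using find_base_vectors(6)[OF ref A] True unfolding e by simp
next
  case False
  let ?A = "mat 1 1 (\<lambda>_. c :: real)"
  have "upper_triangular ?A" unfolding upper_triangular_def by auto
  moreover have "0 \<notin> set (diag_mat ?A)" using False by (auto simp: diag_mat_def)
  ultimately show ?thesis using kernel_upper_triangular(1)[of ?A 1] False by simp
qed

lemma kernel_dim_fix_block:
  "kernel_dim (fix_block n x c) = fixdim n (sperm_mat n x) + (if c = 0 then 1 else 0)"
proof -
  have "kernel_dim (fix_block n x c) = kernel.dim (n + 1) (fix_block n x c)"
    unfolding kernel_dim_def by simp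
  also have "\<dots> = kernel.dim n (sperm_mat n x - 1\<^sub>m n) + kernel.dim 1 (mat 1 1 (\<lambda>_. c))"
    by (rule kernel_four_block_0_mat[OF fix_block_def]) auto
  finally show ?thesis using kernel_dim_1x1 unfolding fixdim_def kernel_dim_def by simp
qed

lemma fixdim_sperms_0: "fixdim 0 (sperm_mat 0 x) = 0"
proof -
  have "sperm_mat 0 x - 1\<^sub>m 0 = 1\<^sub>m 0" by (rule eq_matI) auto
  thus ?thesis unfolding fixdim_def kernel_dim_def using kernel_one_mat(1)[of 0] by simp
qed

lemma fixdim_sperm_Suc:
  assumes x: "x \<in> sperms n"
  shows "fixdim (Suc n) (sperm_mat (Suc n) x) = fixdim n (sperm_mat n x) + 1"
proof -
  have "sperm_mat (Suc n) x - 1\<^sub>m (Suc n) = fix_block n x 0"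
    using sperms_D(5)[OF x] sperms_fixes_bound[OF x]
    by (intro eq_matI) (auto simp: fix_block_index less_Suc_eq)
  thus ?thesis unfolding fixdim_def[of "Suc n"] using kernel_dim_fix_block[of n x 0] by simp
qed

lemma fixdim_sperm_neg_last:
  assumes x: "x \<in> sperms n"
  shows "fixdim (Suc n) (sperm_mat (Suc n) (sperm_neg_last n x)) = fixdim n (sperm_mat n x)"
proof -
  have "sperm_mat (Suc n) (sperm_neg_last n x) - 1\<^sub>m (Suc n) = fix_block n x (-2)"
    using sperms_D(5)[OF x] sperms_fixes_bound[OF x]
    by (intro eq_matI) (auto simp: fix_block_index sperm_neg_last_def less_Suc_eq)
  thus ?thesis unfolding fixdim_def[of "Suc n"] using kernel_dim_fix_block[of n x "-2"] by simp
qed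

definition elem_mat :: "nat \<Rightarrow> nat \<Rightarrow> nat \<Rightarrow> real \<Rightarrow> real mat" where
  "elem_mat m a b c = mat m m (\<lambda>(l,k). (if l = k then 1 else 0) + (if l = a \<and> k = b then c else 0))"

definition neg_diag_mat :: "nat \<Rightarrow> nat \<Rightarrow> real mat" where
  "neg_diag_mat m a = mat m m (\<lambda>(l,k). if l = k then (if l = a then -1 else 1) else 0)"

lemma elem_mat_carrier [simp]: "elem_mat m a b c \<in> carrier_mat m m"
  unfolding elem_mat_def by auto

lemma neg_diag_mat_carrier [simp]: "neg_diag_mat m a \<in> carrier_mat m m"
  unfolding neg_diag_mat_def by auto

lemma elem_mat_dim [simp]: "dim_row (elem_mat m a b c) = m" "dim_col (elem_mat m a b c) = m"
  unfolding elem_mat_def by simp_all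

lemma neg_diag_mat_dim [simp]: "dim_row (neg_diag_mat m a) = m" "dim_col (neg_diag_mat m a) = m"
  unfolding neg_diag_mat_def by simp_all

lemma mult_elem_mat_index:
  assumes A: "A \<in> carrier_mat m m" and ab: "a < m" "b < m" "a \<noteq> b" and i: "i < m" and k: "k < m"
  shows "(A * elem_mat m a b c) $$ (i,k) = A $$ (i,k) + (if k = b then c * A $$ (i,a) else 0)"
proof -
  have "(A * elem_mat m a b c) $$ (i,k) = (\<Sum>l\<in>{0..<m}. A $$ (i,l) * elem_mat m a b c $$ (l,k))"
    using A i k by (simp add: scalar_prod_def elem_mat_def)
  also have "\<dots> = (\<Sum>l\<in>{0..<m}. (if l = k then A $$ (i,l) else 0)
                    + (if l = a then (if k = b then c * A $$ (i,l) else 0) else 0))"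
    using k ab by (intro sum.cong) (auto simp: elem_mat_def)
  also have "\<dots> = A $$ (i,k) + (if k = b then c * A $$ (i,a) else 0)"
    using k ab by (simp add: sum.distrib)
  finally show ?thesis .
qed

lemma elem_mat_mult_index:
  assumes A: "A \<in> carrier_mat m m" and ab: "a < m" "b < m" "a \<noteq> b" and i: "i < m" and k: "k < m"
  shows "(elem_mat m a b c * A) $$ (i,k) = A $$ (i,k) + (if i = a then c * A $$ (b,k) else 0)"
proof -
  have "(elem_mat m a b c * A) $$ (i,k) = (\<Sum>l\<in>{0..<m}. elem_mat m a b c $$ (i,l) * A $$ (l,k))"
    using A i k by (simp add: scalar_prod_def elem_mat_def)
  also have "\<dots> = (\<Sum>l\<in>{0..<m}. (if l = i then A $$ (l,k) else 0)
                    + (if l = b then (if i = a then c * A $$ (l,k) else 0) else 0))"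
    using i ab by (intro sum.cong) (auto simp: elem_mat_def)
  also have "\<dots> = A $$ (i,k) + (if i = a then c * A $$ (b,k) else 0)"
    using i ab by (simp add: sum.distrib)
  finally show ?thesis .
qed

lemma neg_diag_mat_mult_index:
  assumes A: "A \<in> carrier_mat m m" and i: "i < m" and k: "k < m"
  shows "(neg_diag_mat m a * A) $$ (i,k) = (if i = a then -1 else 1) * A $$ (i,k)"
proof -
  have "(neg_diag_mat m a * A) $$ (i,k) = (\<Sum>l\<in>{0..<m}. neg_diag_mat m a $$ (i,l) * A $$ (l,k))"
    using A i k by (simp add: scalar_prod_def neg_diag_mat_def)
  also have "\<dots> = (\<Sum>l\<in>{0..<m}. if l = i then (if i = a then -1 else 1) * A $$ (l,k) else 0)"
    using i by (intro sum.cong) (auto simp: neg_diag_mat_def)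
  finally show ?thesis using i by simp
qed

lemma elem_mat_inverse:
  assumes ab: "a < m" "b < m" "a \<noteq> b"
  shows "elem_mat m a b c * elem_mat m a b (-c) = 1\<^sub>m m"
proof (rule eq_matI)
  fix i k assume "i < dim_row (1\<^sub>m m)" "k < dim_col (1\<^sub>m m)"
  hence i: "i < m" and k: "k < m" by auto
  show "(elem_mat m a b c * elem_mat m a b (-c)) $$ (i,k) = 1\<^sub>m m $$ (i,k)"
    using mult_elem_mat_index[OF elem_mat_carrier ab i k, of a b c "-c"] ab i k
    by (simp add: elem_mat_def)
qed (auto simp: elem_mat_def)

lemma neg_diag_mat_inverse: "neg_diag_mat m a * neg_diag_mat m a = 1\<^sub>m m"
proof (rule eq_matI)
  fix i k assume "i < dim_row (1\<^sub>m m)" "k < dim_col (1\<^sub>m m)"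
  hence i: "i < m" and k: "k < m" by auto
  show "(neg_diag_mat m a * neg_diag_mat m a) $$ (i,k) = 1\<^sub>m m $$ (i,k)"
    using neg_diag_mat_mult_index[OF neg_diag_mat_carrier i k] i k by (simp add: neg_diag_mat_def)
qed (auto simp: neg_diag_mat_def)

lemma fix_block_transform_index:
  assumes x: "x \<in> sperms n" and j: "j < n" and i: "i < Suc n" and k: "k < Suc n"
  shows "(neg_diag_mat (Suc n) n * (elem_mat (Suc n) (fst x j) n c
      * (fix_block n x 1 * elem_mat (Suc n) n j (-\<sigma>)))) $$ (i,k)
    = (if i = n then -1 else 1) *
     ((fix_block n x 1 $$ (i,k) + (if k = j then -\<sigma> * (if i = n then 1 else 0) else 0)) +
      (if i = fst x j then c * ((if k = n then 1 else 0) + (if k = j then -\<sigma> else 0)) else 0))"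
    (is "(?D * (?EL * (?Y * ?ER))) $$ (i,k) = _")
proof -
  have pj: "fst x j < n" using sperms_D(5)[OF x j] .
  have YR: "(?Y * ?ER) $$ (a,b) = ?Y $$ (a,b) + (if b = j then -\<sigma> * ?Y $$ (a,n) else 0)"
    if "a < Suc n" "b < Suc n" for a b
    by (rule mult_elem_mat_index) (use j that in auto)
  have bn: "?Y $$ (a, n) = (if a = n then 1 else 0)" if "a < Suc n" for a
    using that sperms_fixes_bound[OF x] by (simp add: fix_block_index)
  have nb: "?Y $$ (n, b) = (if b = n then 1 else 0)" if "b < Suc n" for b
    using that by (simp add: fix_block_index)
  have Yi: "(?Y * ?ER) $$ (i,k) = ?Y $$ (i,k) + (if k = j then -\<sigma> * (if i = n then 1 else 0) else 0)"
    using YR[OF i k] bn[OF i] by simp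
  have Yn: "(?Y * ?ER) $$ (n,k) = (if k = n then 1 else 0) + (if k = j then -\<sigma> else 0)"
    using YR[of n k] k j nb[OF k] bn[of n] by simp
  have LZ: "(?EL * (?Y * ?ER)) $$ (i,k) = (?Y * ?ER) $$ (i,k)
      + (if i = fst x j then c * (?Y * ?ER) $$ (n,k) else 0)"
    by (rule elem_mat_mult_index) (use pj i k in auto)
  have D: "(?D * (?EL * (?Y * ?ER))) $$ (i,k) = (if i = n then -1 else 1) * (?EL * (?Y * ?ER)) $$ (i,k)"
    by (rule neg_diag_mat_mult_index) (use i k in auto)
  show ?thesis unfolding D LZ Yi Yn ..
qed

text \<open>Up to invertible row and column operations, the fixed-space equations of
  sperm_insert n x j \<sigma> are those of x together with the trivial equation on the last coordinate.\<close>

lemma sperm_insert_fix_equations: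
  assumes x: "x \<in> sperms n" and j: "j < n" and s: "\<sigma> = 1 \<or> \<sigma> = -1"
  shows "sperm_mat (Suc n) (sperm_insert n x j \<sigma>) - 1\<^sub>m (Suc n) =
    neg_diag_mat (Suc n) n * (elem_mat (Suc n) (fst x j) n (\<sigma> * snd x j)
      * (fix_block n x 1 * elem_mat (Suc n) n j (-\<sigma>)))"
    (is "?M = ?R")
proof (rule eq_matI)
  fix i k assume "i < dim_row ?R" "k < dim_col ?R"
  hence i: "i < Suc n" and k: "k < Suc n" by auto
  have pj: "fst x j < n" using sperms_D(5)[OF x j] .
  have pinj: "fst x a = fst x b \<Longrightarrow> a = b" for a b using permutes_inj[OF sperms_D(1)[OF x]] by (meson injD)
  have pn: "fst x a < n" if "a < n" for a using sperms_D(5)[OF x that] .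
  have pnn: "fst x n = n" using sperms_fixes_bound[OF x] by simp
  have ss: "\<sigma> * \<sigma> = 1" using s by auto
  have sj: "snd x j * snd x j = 1" using sperms_D(6)[OF x] .
  have L: "?M $$ (i,k) = (if i = fst x (transpose j n k) then ((snd x)(j := \<sigma>, n := \<sigma> * snd x j)) k else 0)
      - (if i = k then 1 else 0)"
    using i k by (simp add: sperm_insert_def)
  consider "i = n" | "i = fst x j" | "i \<noteq> n" "i \<noteq> fst x j" by blast
  hence "(if i = fst x (transpose j n k) then ((snd x)(j := \<sigma>, n := \<sigma> * snd x j)) k else 0)
      - (if i = k then 1 else 0) = (if i = n then -1 else 1) *
     ((fix_block n x 1 $$ (i,k) + (if k = j then -\<sigma> * (if i = n then 1 else 0) else 0)) +
      (if i = fst x j then \<sigma> * snd x j * ((if k = n then 1 else 0) + (if k = j then -\<sigma> else 0)) else 0))"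
  proof cases
    case 1
    thus ?thesis using k j pj pnn pn[of k]
      by (cases "k = n"; cases "k = j") (auto simp: fix_block_index transpose_def)
  next
    case 2
    thus ?thesis using k j pj pnn pn[of k] pinj[of k j] ss sj
      by (cases "k = n"; cases "k = j") (auto simp: fix_block_index transpose_def algebra_simps)
  next
    case 3
    thus ?thesis using i k j pj pnn pn[of k]
      by (cases "k = n"; cases "k = j") (auto simp: fix_block_index transpose_def)
  qed
  thus "?M $$ (i,k) = ?R $$ (i,k)" unfolding L fix_block_transform_index[OF x j i k] .
qed auto

lemma fixdim_sperm_insert:
  assumes x: "x \<in> sperms n" and j: "j < n" and s: "\<sigma> = 1 \<or> \<sigma> = -1"
  shows "fixdim (Suc n) (sperm_mat (Suc n) (sperm_insert n x j \<sigma>)) = fixdim n (sperm_mat n x)"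
proof -
  let ?m = "Suc n"
  let ?Y = "fix_block n x 1"
  let ?ER = "elem_mat ?m n j (-\<sigma>)"
  let ?EL = "elem_mat ?m (fst x j) n (\<sigma> * snd x j)"
  let ?D = "neg_diag_mat ?m n"
  have pj: "fst x j < n" using sperms_D(5)[OF x j] .
  have YE: "?Y * ?ER \<in> carrier_mat ?m ?m" and EYE: "?EL * (?Y * ?ER) \<in> carrier_mat ?m ?m" by auto
  have "mat_kernel (?D * (?EL * (?Y * ?ER))) = mat_kernel (?EL * (?Y * ?ER))"
    by (rule mat_kernel_mult_eq[OF EYE neg_diag_mat_carrier neg_diag_mat_carrier neg_diag_mat_inverse])
  also have "\<dots> = mat_kernel (?Y * ?ER)"
    using elem_mat_inverse[of "fst x j" ?m n "-(\<sigma> * snd x j)"] pj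
    by (intro mat_kernel_mult_eq[OF YE elem_mat_carrier elem_mat_carrier]) auto
  finally have "kernel.dim ?m (?D * (?EL * (?Y * ?ER))) = kernel.dim ?m (?Y * ?ER)" by simp
  also have "\<dots> = kernel.dim ?m ?Y"
    using elem_mat_inverse[of n ?m j "-\<sigma>"] j
    by (intro mat_kernel_dim_mult_eq_right[OF fix_block_carrier elem_mat_carrier elem_mat_carrier]) auto
  finally show ?thesis
    using kernel_dim_fix_block[of n x 1]
    unfolding fixdim_def[of ?m] sperm_insert_fix_equations[OF x j s] kernel_dim_def by simp
qed

section \<open>Two statistics of signed permutations\<close>

definition fixed_axes :: "nat \<Rightarrow> signed_perm \<Rightarrow> nat" where
  "fixed_axes n x = card {i. i < n \<and> fst x i = i \<and> snd x i = 1}"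

definition rat_sign :: "real \<Rightarrow> rat" where
  "rat_sign v = (if v = 1 then 1 else -1)"

definition sign_char :: "nat \<Rightarrow> signed_perm \<Rightarrow> rat" where
  "sign_char n x = (\<Prod>i<n. rat_sign (snd x i))"

lemma rat_sign_mult: "(a = 1 \<or> a = -1) \<Longrightarrow> (b = 1 \<or> b = -1) \<Longrightarrow> rat_sign (a * b) = rat_sign a * rat_sign b"
  unfolding rat_sign_def by auto

lemma sign_char_cases: "sign_char n x = 1 \<or> sign_char n x = -1"
  unfolding sign_char_def by (induction n) (auto simp: rat_sign_def)

lemma sign_char_Suc: "x \<in> sperms n \<Longrightarrow> sign_char (Suc n) x = sign_char n x"
  unfolding sign_char_def using sperms_fixes_bound by (simp add: rat_sign_def)

lemma sign_char_neg_last: "sign_char (Suc n) (sperm_neg_last n x) = - sign_char n x"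
proof -
  have "(\<Prod>i<n. rat_sign (snd (sperm_neg_last n x) i)) = (\<Prod>i<n. rat_sign (snd x i))"
    unfolding sperm_neg_last_def by (intro prod.cong) auto
  thus ?thesis unfolding sign_char_def by (simp add: sperm_neg_last_def rat_sign_def)
qed

lemma sign_char_insert:
  assumes x: "x \<in> sperms n" and j: "j < n" and s: "\<sigma> = 1 \<or> \<sigma> = -1"
  shows "sign_char (Suc n) (sperm_insert n x j \<sigma>) = sign_char n x"
proof -
  let ?t = "snd (sperm_insert n x j \<sigma>)" and ?R = "\<Prod>i\<in>{..<n}-{j}. rat_sign (snd x i)"
  have "(\<Prod>i<n. rat_sign (?t i)) = rat_sign (?t j) * (\<Prod>i\<in>{..<n}-{j}. rat_sign (?t i))"
    using j by (simp add: prod.remove)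
  also have "(\<Prod>i\<in>{..<n}-{j}. rat_sign (?t i)) = ?R"
    by (intro prod.cong) (auto simp: sperm_insert_def)
  finally have A: "(\<Prod>i<n. rat_sign (?t i)) = rat_sign \<sigma> * ?R" using j by (simp add: sperm_insert_def)
  have B: "sign_char n x = rat_sign (snd x j) * ?R"
    unfolding sign_char_def using j by (simp add: prod.remove)
  have C: "rat_sign (?t n) = rat_sign \<sigma> * rat_sign (snd x j)"
    unfolding sperm_insert_def using j s sperms_D(2)[OF x, of j] by (simp add: rat_sign_mult)
  have "sign_char (Suc n) (sperm_insert n x j \<sigma>) = (rat_sign \<sigma> * rat_sign \<sigma>) * (rat_sign (snd x j) * ?R)"
    unfolding sign_char_def prod.lessThan_Suc A C by (simp add: algebra_simps)
  also have "\<dots> = sign_char n x" using B by (simp add: rat_sign_def)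
  finally show ?thesis .
qed

lemma sign_char_mult:
  assumes x: "x \<in> sperms n" and y: "y \<in> sperms n"
  shows "sign_char n (sperm_mult x y) = sign_char n x * sign_char n y"
proof -
  have "sign_char n (sperm_mult x y) = (\<Prod>i<n. rat_sign (snd x (fst y i)) * rat_sign (snd y i))"
    unfolding sign_char_def sperm_mult_def using sperms_D(2)[OF x] sperms_D(2)[OF y]
    by (simp add: rat_sign_mult)
  also have "\<dots> = (\<Prod>i<n. rat_sign (snd x (fst y i))) * (\<Prod>i<n. rat_sign (snd y i))"
    by (rule prod.distrib)
  also have "(\<Prod>i<n. rat_sign (snd x (fst y i))) = (\<Prod>i<n. rat_sign (snd x i))"
    using prod.permute[OF sperms_D(1)[OF y], of "\<lambda>i. rat_sign (snd x i)"] by (simp add: o_def)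
  finally show ?thesis unfolding sign_char_def by simp
qed

lemma sign_char_inv: "x \<in> sperms n \<Longrightarrow> sign_char n (sperm_inv x) = sign_char n x"
  using sign_char_mult[OF sperm_inv_in_sperms, of x n x] sperm_mult_inv(1)[of x n]
    sign_char_cases[of n x] sign_char_cases[of n "sperm_inv x"]
  by (auto simp: sign_char_def sperm_one_def rat_sign_def)

lemma fixed_axes_Suc:
  assumes x: "x \<in> sperms n"
  shows "fixed_axes (Suc n) x = fixed_axes n x + 1"
proof -
  have "{i. i < Suc n \<and> fst x i = i \<and> snd x i = 1} = insert n {i. i < n \<and> fst x i = i \<and> snd x i = 1}"
    using sperms_fixes_bound[OF x] by (auto simp: less_Suc_eq)
  thus ?thesis unfolding fixed_axes_def by simp
qed

lemma fixed_axes_neg_last: "fixed_axes (Suc n) (sperm_neg_last n x) = fixed_axes n x"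
proof -
  have "{i. i < Suc n \<and> fst (sperm_neg_last n x) i = i \<and> snd (sperm_neg_last n x) i = 1}
      = {i. i < n \<and> fst x i = i \<and> snd x i = 1}"
    unfolding sperm_neg_last_def by (auto simp: less_Suc_eq)
  thus ?thesis unfolding fixed_axes_def by simp
qed

lemma fixed_axes_insert:
  assumes x: "x \<in> sperms n" and j: "j < n"
  shows "fixed_axes (Suc n) (sperm_insert n x j \<sigma>) + (if fst x j = j \<and> snd x j = 1 then 1 else 0)
    = fixed_axes n x"
proof -
  let ?S = "{i. i < n \<and> fst x i = i \<and> snd x i = 1}"
  have "{i. i < Suc n \<and> fst (sperm_insert n x j \<sigma>) i = i \<and> snd (sperm_insert n x j \<sigma>) i = 1} = ?S - {j}"
    using j sperms_D(5)[OF x j] sperms_fixes_bound[OF x]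
    unfolding sperm_insert_def by (auto simp: less_Suc_eq transpose_def)
  thus ?thesis unfolding fixed_axes_def using j card.remove[of ?S j] by (auto simp: card_Diff_singleton_if)
qed

lemma sum_fixed_axes_insert:
  assumes x: "x \<in> sperms n"
  shows "(\<Sum>j<n. of_nat (fixed_axes (Suc n) (sperm_insert n x j \<sigma>)) :: 'a :: comm_ring_1)
    = (of_nat n - 1) * of_nat (fixed_axes n x)"
proof -
  have ind: "(\<Sum>j<n. if fst x j = j \<and> snd x j = 1 then 1 else 0) = fixed_axes n x"
    unfolding fixed_axes_def by (simp add: sum.If_cases Int_def conj_commute)
  have "(\<Sum>j<n. fixed_axes (Suc n) (sperm_insert n x j \<sigma>) + (if fst x j = j \<and> snd x j = 1 then 1 else 0))
      = (\<Sum>j<n. fixed_axes n x)"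
    using fixed_axes_insert[OF x] by (intro sum.cong) simp_all
  hence "(\<Sum>j<n. fixed_axes (Suc n) (sperm_insert n x j \<sigma>)) + fixed_axes n x = n * fixed_axes n x"
    unfolding sum.distrib ind by simp
  hence "(\<Sum>j<n. of_nat (fixed_axes (Suc n) (sperm_insert n x j \<sigma>)) :: 'a) + of_nat (fixed_axes n x)
      = of_nat n * of_nat (fixed_axes n x)"
    by (metis of_nat_add of_nat_mult of_nat_sum)
  thus ?thesis by (simp add: algebra_simps eq_diff_eq)
qed

section \<open>Generating polynomials of the fixed-space dimension\<close>

definition fixdim_poly :: "nat \<Rightarrow> (signed_perm \<Rightarrow> rat) \<Rightarrow> rat poly" where
  "fixdim_poly n w = (\<Sum>x\<in>sperms n. monom (w x) (fixdim n (sperm_mat n x)))"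

lemma fixdim_poly_cong: "(\<And>x. x \<in> sperms n \<Longrightarrow> v x = w x) \<Longrightarrow> fixdim_poly n v = fixdim_poly n w"
  unfolding fixdim_poly_def by (intro sum.cong) auto

lemma fixdim_poly_add: "fixdim_poly n (\<lambda>x. v x + w x) = fixdim_poly n v + fixdim_poly n w"
  unfolding fixdim_poly_def by (simp add: add_monom[symmetric] sum.distrib)

lemma fixdim_poly_diff: "fixdim_poly n (\<lambda>x. v x - w x) = fixdim_poly n v - fixdim_poly n w"
  unfolding fixdim_poly_def by (simp add: diff_monom[symmetric] sum_subtractf)

lemma fixdim_poly_cmult: "fixdim_poly n (\<lambda>x. c * w x) = [:c:] * fixdim_poly n w"
  unfolding fixdim_poly_def sum_distrib_left by (simp add: smult_monom)

lemma poly_fixdim_poly_1: "poly (fixdim_poly n w) 1 = (\<Sum>x\<in>sperms n. w x)"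
  unfolding fixdim_poly_def by (simp add: poly_sum poly_monom)

lemma fixdim_poly_Suc:
  "fixdim_poly (Suc n) w = monom 1 1 * fixdim_poly n w
     + fixdim_poly n (\<lambda>x. w (sperm_neg_last n x) + (\<Sum>j<n. w (sperm_insert n x j 1) + w (sperm_insert n x j (-1))))"
proof -
  let ?d = "\<lambda>x. fixdim n (sperm_mat n x)"
  let ?W = "\<lambda>x. w (sperm_neg_last n x) + (\<Sum>j<n. w (sperm_insert n x j 1) + w (sperm_insert n x j (-1)))"
  have step: "monom (w x) (fixdim (Suc n) (sperm_mat (Suc n) x))
        + monom (w (sperm_neg_last n x)) (fixdim (Suc n) (sperm_mat (Suc n) (sperm_neg_last n x)))
        + (\<Sum>j<n. monom (w (sperm_insert n x j 1)) (fixdim (Suc n) (sperm_mat (Suc n) (sperm_insert n x j 1)))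
             + monom (w (sperm_insert n x j (-1))) (fixdim (Suc n) (sperm_mat (Suc n) (sperm_insert n x j (-1)))))
      = monom 1 1 * monom (w x) (?d x) + monom (?W x) (?d x)"
    if x: "x \<in> sperms n" for x
  proof -
    have "(\<Sum>j<n. monom (w (sperm_insert n x j 1)) (fixdim (Suc n) (sperm_mat (Suc n) (sperm_insert n x j 1)))
             + monom (w (sperm_insert n x j (-1))) (fixdim (Suc n) (sperm_mat (Suc n) (sperm_insert n x j (-1)))))
        = (\<Sum>j<n. monom (w (sperm_insert n x j 1) + w (sperm_insert n x j (-1))) (?d x))"
      by (intro sum.cong refl) (simp add: fixdim_sperm_insert[OF x] add_monom)
    also have "\<dots> = monom (\<Sum>j<n. w (sperm_insert n x j 1) + w (sperm_insert n x j (-1))) (?d x)"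
      by (rule monom_sum[symmetric])
    finally show ?thesis
      unfolding fixdim_sperm_Suc[OF x] fixdim_sperm_neg_last[OF x] mult_monom add_monom[symmetric]
      by (simp add: add.assoc)
  qed
  have "fixdim_poly (Suc n) w = (\<Sum>x\<in>sperms n. monom 1 1 * monom (w x) (?d x) + monom (?W x) (?d x))"
    unfolding fixdim_poly_def sum_sperms_Suc by (rule sum.cong[OF refl]) (rule step)
  also have "\<dots> = monom 1 1 * fixdim_poly n w + fixdim_poly n ?W"
    unfolding fixdim_poly_def sum.distrib sum_distrib_left ..
  finally show ?thesis .
qed

lemma fixdim_poly_0: "fixdim_poly 0 w = [:w sperm_one:]"
  unfolding fixdim_poly_def sperms_0 by (simp add: fixdim_sperms_0 monom_0)

lemma fixdim_poly_one_Suc: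
  "fixdim_poly (Suc n) (\<lambda>_. 1) = monom 1 1 * fixdim_poly n (\<lambda>_. 1) + of_nat (2*n+1) * fixdim_poly n (\<lambda>_. 1)"
proof -
  have "fixdim_poly n (\<lambda>x. 1 + (\<Sum>j<n. 1 + 1)) = fixdim_poly n (\<lambda>x. of_nat (2*n+1) * 1)"
    by (rule fixdim_poly_cong) simp
  also have "\<dots> = of_nat (2*n+1) * fixdim_poly n (\<lambda>_. 1)"
    unfolding fixdim_poly_cmult of_nat_poly ..
  finally show ?thesis unfolding fixdim_poly_Suc by simp
qed

lemma fixdim_poly_one: "fixdim_poly n (\<lambda>_. 1) = (\<Prod>a = 1..n. [:of_nat (2*a-1), 1:])"
proof (induction n)
  case 0
  show ?case by (simp add: fixdim_poly_0)
next
  case (Suc n)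
  have "[:of_nat (2 * Suc n - 1), 1:] = monom 1 1 + (of_nat (2*n+1) :: rat poly)"
    by (rule poly_eqI) (simp add: coeff_monom of_nat_poly coeff_pCons split: nat.split)
  thus ?case unfolding fixdim_poly_one_Suc Suc.IH by (simp add: prod.nat_ivl_Suc' algebra_simps)
qed

lemma fixdim_poly_sign_Suc:
  "fixdim_poly (Suc n) (sign_char (Suc n))
     = monom 1 1 * fixdim_poly n (sign_char n) + of_nat (2*n) * fixdim_poly n (sign_char n) - fixdim_poly n (sign_char n)"
proof -
  have "fixdim_poly n (sign_char (Suc n)) = fixdim_poly n (sign_char n)"
    by (rule fixdim_poly_cong) (simp add: sign_char_Suc)
  moreover have "fixdim_poly n (\<lambda>x. sign_char (Suc n) (sperm_neg_last n x)
      + (\<Sum>j<n. sign_char (Suc n) (sperm_insert n x j 1) + sign_char (Suc n) (sperm_insert n x j (-1))))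
    = fixdim_poly n (\<lambda>x. of_nat (2*n) * sign_char n x - sign_char n x)"
    by (rule fixdim_poly_cong) (simp add: sign_char_neg_last sign_char_insert)
  ultimately show ?thesis
    unfolding fixdim_poly_Suc fixdim_poly_diff fixdim_poly_cmult of_nat_poly[symmetric] by simp
qed

lemma fixdim_poly_sign: "fixdim_poly (Suc n) (sign_char (Suc n)) = (monom 1 1 - 1) * fixdim_poly n (\<lambda>_. 1)"
proof (induction n)
  case 0
  show ?case unfolding fixdim_poly_sign_Suc by (simp add: fixdim_poly_0 sign_char_def one_pCons)
next
  case (Suc n)
  show ?case
    unfolding fixdim_poly_sign_Suc[of "Suc n"] Suc.IH fixdim_poly_one_Suc by (simp add: algebra_simps)
qed

lemma fixdim_poly_fixed_axes_Suc:
  "fixdim_poly (Suc n) (\<lambda>x. of_nat (fixed_axes (Suc n) x))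
     = monom 1 1 * (fixdim_poly n (\<lambda>x. of_nat (fixed_axes n x)) + fixdim_poly n (\<lambda>_. 1))
       + of_nat (2*n) * fixdim_poly n (\<lambda>x. of_nat (fixed_axes n x)) - fixdim_poly n (\<lambda>x. of_nat (fixed_axes n x))"
proof -
  have "fixdim_poly n (\<lambda>x. of_nat (fixed_axes (Suc n) x)) = fixdim_poly n (\<lambda>x. of_nat (fixed_axes n x) + 1)"
    by (rule fixdim_poly_cong) (simp add: fixed_axes_Suc)
  moreover have "fixdim_poly n (\<lambda>x. of_nat (fixed_axes (Suc n) (sperm_neg_last n x))
      + (\<Sum>j<n. of_nat (fixed_axes (Suc n) (sperm_insert n x j 1)) + of_nat (fixed_axes (Suc n) (sperm_insert n x j (-1)))))
    = fixdim_poly n (\<lambda>x. of_nat (2*n) * of_nat (fixed_axes n x) - of_nat (fixed_axes n x))"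
    by (rule fixdim_poly_cong) (simp add: fixed_axes_neg_last sum.distrib sum_fixed_axes_insert algebra_simps)
  ultimately show ?thesis
    unfolding fixdim_poly_Suc fixdim_poly_add fixdim_poly_diff fixdim_poly_cmult of_nat_poly[symmetric]
    by simp
qed

lemma fixdim_poly_fixed_axes:
  "fixdim_poly (Suc n) (\<lambda>x. of_nat (fixed_axes (Suc n) x)) = of_nat (Suc n) * monom 1 1 * fixdim_poly n (\<lambda>_. 1)"
proof (induction n)
  case 0
  show ?case unfolding fixdim_poly_fixed_axes_Suc by (simp add: fixdim_poly_0 fixed_axes_def)
next
  case (Suc n)
  show ?case
    unfolding fixdim_poly_fixed_axes_Suc[of "Suc n"] Suc.IH fixdim_poly_one_Suc by (simp add: algebra_simps)
qed

lemma fixdim_poly_sign_fixed_axes_Suc: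
  "fixdim_poly (Suc n) (\<lambda>x. sign_char (Suc n) x * of_nat (fixed_axes (Suc n) x))
     = monom 1 1 * (fixdim_poly n (\<lambda>x. sign_char n x * of_nat (fixed_axes n x)) + fixdim_poly n (sign_char n))
       + of_nat (2*n) * fixdim_poly n (\<lambda>x. sign_char n x * of_nat (fixed_axes n x))
       - 3 * fixdim_poly n (\<lambda>x. sign_char n x * of_nat (fixed_axes n x))"
proof -
  let ?g = "\<lambda>x. sign_char n x * of_nat (fixed_axes n x)"
  let ?g' = "\<lambda>x. sign_char (Suc n) x * of_nat (fixed_axes (Suc n) x)"
  have "fixdim_poly n ?g' = fixdim_poly n (\<lambda>x. ?g x + sign_char n x)"
    by (rule fixdim_poly_cong) (simp add: fixed_axes_Suc sign_char_Suc distrib_left)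
  also have "\<dots> = fixdim_poly n ?g + fixdim_poly n (sign_char n)"
    by (rule fixdim_poly_add)
  finally have first: "fixdim_poly n ?g' = fixdim_poly n ?g + fixdim_poly n (sign_char n)" .
  have "fixdim_poly n (\<lambda>x. ?g' (sperm_neg_last n x) + (\<Sum>j<n. ?g' (sperm_insert n x j 1) + ?g' (sperm_insert n x j (-1))))
    = fixdim_poly n (\<lambda>x. of_nat (2*n) * ?g x - 3 * ?g x)"
  proof (rule fixdim_poly_cong)
    fix x assume x: "x \<in> sperms n"
    have "(\<Sum>j<n. ?g' (sperm_insert n x j 1) + ?g' (sperm_insert n x j (-1)))
        = sign_char n x * ((\<Sum>j<n. of_nat (fixed_axes (Suc n) (sperm_insert n x j 1)))
             + (\<Sum>j<n. of_nat (fixed_axes (Suc n) (sperm_insert n x j (-1)))))"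
      by (simp add: sign_char_insert[OF x] sum.distrib sum_distrib_left distrib_left)
    also have "\<dots> = sign_char n x * (2 * ((of_nat n - 1) * of_nat (fixed_axes n x)))"
      unfolding sum_fixed_axes_insert[OF x] by simp
    finally show "?g' (sperm_neg_last n x) + (\<Sum>j<n. ?g' (sperm_insert n x j 1) + ?g' (sperm_insert n x j (-1)))
        = of_nat (2*n) * ?g x - 3 * ?g x"
      by (simp add: sign_char_neg_last fixed_axes_neg_last algebra_simps)
  qed
  also have "\<dots> = [:of_nat (2*n):] * fixdim_poly n ?g - [:3:] * fixdim_poly n ?g"
    unfolding fixdim_poly_diff fixdim_poly_cmult ..
  also have "\<dots> = of_nat (2*n) * fixdim_poly n ?g - 3 * fixdim_poly n ?g"
    by (simp only: of_nat_poly numeral_poly)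
  finally have rest: "fixdim_poly n (\<lambda>x. ?g' (sperm_neg_last n x)
      + (\<Sum>j<n. ?g' (sperm_insert n x j 1) + ?g' (sperm_insert n x j (-1))))
    = of_nat (2*n) * fixdim_poly n ?g - 3 * fixdim_poly n ?g" .
  show ?thesis unfolding fixdim_poly_Suc[of n ?g'] first rest by (simp add: algebra_simps)
qed

lemma fixdim_poly_sign_fixed_axes:
  "fixdim_poly (Suc n) (\<lambda>x. sign_char (Suc n) x * of_nat (fixed_axes (Suc n) x))
     = of_nat (Suc n) * monom 1 1 * fixdim_poly n (sign_char n)"
proof (induction n)
  case 0
  show ?case unfolding fixdim_poly_sign_fixed_axes_Suc by (simp add: fixdim_poly_0 fixed_axes_def)
next
  case (Suc n)
  show ?case
    unfolding fixdim_poly_sign_fixed_axes_Suc[of "Suc n"] Suc.IH fixdim_poly_sign_Suc by (simp add: algebra_simps)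
qed

section \<open>Even signed permutations\<close>

text \<open>For m = 0 these form the Weyl group of type D_r, for m = 1 its parabolic subgroup
  generated by the reflections in \<alpha>_2, ..., \<alpha>_r.\<close>

definition even_sperms_fixing :: "nat \<Rightarrow> nat \<Rightarrow> signed_perm set" where
  "even_sperms_fixing r m = {x \<in> sperms r. sign_char r x = 1 \<and> (\<forall>i<m. fst x i = i \<and> snd x i = 1)}"

lemma even_sperms_fixing_sperms: "x \<in> even_sperms_fixing r m \<Longrightarrow> x \<in> sperms r"
  unfolding even_sperms_fixing_def by simp

lemma sperm_one_even [simp]: "sperm_one \<in> even_sperms_fixing r m"
  using sperm_one_in_sperms[of r] unfolding even_sperms_fixing_def
  by (simp add: sperm_one_def sign_char_def rat_sign_def)

lemma sperm_mult_even:
  assumes x: "x \<in> even_sperms_fixing r m" and y: "y \<in> even_sperms_fixing r m"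
  shows "sperm_mult x y \<in> even_sperms_fixing r m"
proof -
  have xs: "x \<in> sperms r" and ys: "y \<in> sperms r" using x y by (simp_all add: even_sperms_fixing_sperms)
  show ?thesis
    using x y sperm_mult_in_sperms[OF xs ys] sign_char_mult[OF xs ys]
    unfolding even_sperms_fixing_def by (auto simp: sperm_mult_def)
qed

lemma sperm_inv_even: "x \<in> even_sperms_fixing r 0 \<Longrightarrow> sperm_inv x \<in> even_sperms_fixing r 0"
  unfolding even_sperms_fixing_def by (simp add: sperm_inv_in_sperms sign_char_inv)

lemma sum_even_sperms:
  "(\<Sum>x\<in>even_sperms_fixing n 0. g x) = (\<Sum>x\<in>sperms n. if sign_char n x = 1 then g x else 0)"
  unfolding even_sperms_fixing_def by (simp add: sum.inter_filter)

lemma card_sperms: "card (sperms n) = 2 ^ n * fact n"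
proof (induction n)
  case 0
  show ?case by (simp add: sperms_0)
next
  case (Suc n)
  have "card (sperms (Suc n)) = (\<Sum>x\<in>sperms (Suc n). 1)" by simp
  also have "\<dots> = (\<Sum>x\<in>sperms n. 1 + 1 + (\<Sum>j<n. 1 + 1))" by (rule sum_sperms_Suc)
  also have "\<dots> = card (sperms n) * (2 * Suc n)" by simp
  finally show ?case unfolding Suc.IH by (simp add: algebra_simps)
qed

text \<open>The signs sum to zero because X - 1 divides their generating polynomial.\<close>

lemma sum_sign_char: "(\<Sum>x\<in>sperms (Suc n). sign_char (Suc n) x) = 0"
  using poly_fixdim_poly_1[of "Suc n" "sign_char (Suc n)"] by (simp add: fixdim_poly_sign poly_monom)

lemma card_even_sperms:
  assumes "n \<ge> 1"
  shows "card (even_sperms_fixing n 0) = 2 ^ (n - 1) * fact n"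
proof -
  obtain k where n: "n = Suc k" using assms by (cases n) auto
  have "(of_nat (card (even_sperms_fixing n 0)) :: rat) = (\<Sum>x\<in>even_sperms_fixing n 0. 1)" by simp
  also have "\<dots> = (\<Sum>x\<in>sperms n. if sign_char n x = 1 then 1 else 0)" by (rule sum_even_sperms)
  also have "\<dots> = (\<Sum>x\<in>sperms n. 1/2 + 1/2 * sign_char n x)"
  proof (rule sum.cong[OF refl])
    fix x
    show "(if sign_char n x = 1 then 1 else 0) = 1/2 + 1/2 * sign_char n x"
      using sign_char_cases[of n x] by auto
  qed
  also have "\<dots> = 1/2 * of_nat (card (sperms n))"
    unfolding n sum.distrib sum_distrib_left[symmetric] sum_sign_char by simp
  also have "\<dots> = of_nat (2 ^ (n - 1) * fact n)"
    unfolding card_sperms n by simp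
  finally show ?thesis by (simp only: of_nat_eq_iff)
qed

lemma fixdim_poly_even:
  "(\<Sum>x\<in>even_sperms_fixing n 0. monom (2 * of_nat (fixed_axes n x) - 1) (fixdim n (sperm_mat n x)))
   = fixdim_poly n (\<lambda>x. of_nat (fixed_axes n x)) + fixdim_poly n (\<lambda>x. sign_char n x * of_nat (fixed_axes n x))
     - Polynomial.smult (1/2) (fixdim_poly n (\<lambda>_. 1) + fixdim_poly n (sign_char n))"
proof -
  have "(\<Sum>x\<in>even_sperms_fixing n 0. monom (2 * of_nat (fixed_axes n x) - 1) (fixdim n (sperm_mat n x)))
    = fixdim_poly n (\<lambda>x. of_nat (fixed_axes n x) + sign_char n x * of_nat (fixed_axes n x)
                          - (1/2 * 1 + 1/2 * sign_char n x))"
    unfolding sum_even_sperms fixdim_poly_def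
  proof (intro sum.cong refl)
    fix x
    show "(if sign_char n x = 1 then monom (2 * of_nat (fixed_axes n x) - 1) (fixdim n (sperm_mat n x)) else 0)
      = monom (of_nat (fixed_axes n x) + sign_char n x * of_nat (fixed_axes n x)
               - (1/2 * 1 + 1/2 * sign_char n x)) (fixdim n (sperm_mat n x))"
      using sign_char_cases[of n x] by auto
  qed
  thus ?thesis
    unfolding fixdim_poly_add fixdim_poly_diff fixdim_poly_cmult by (simp add: smult_add_right)
qed

lemma fixdim_poly_even_closed:
  assumes "r \<ge> 2"
  shows "fixdim_poly r (\<lambda>x. of_nat (fixed_axes r x)) + fixdim_poly r (\<lambda>x. sign_char r x * of_nat (fixed_axes r x))
     - Polynomial.smult (1/2) (fixdim_poly r (\<lambda>_. 1) + fixdim_poly r (sign_char r))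
   = [:-1, 1:] * [:of_nat ((r - 1) * (2 * r - 3)), of_nat (2 * r - 1):] * (\<Prod>a = 1..r - 2. [:of_nat (2 * a - 1), 1:])"
proof -
  define m where "m = r - 2"
  have r: "r = Suc (Suc m)" using assms unfolding m_def by simp
  let ?X = "monom 1 1 :: rat poly" and ?A = "fixdim_poly m (\<lambda>_. 1)"
  have A1: "fixdim_poly (Suc m) (\<lambda>_. 1) = (?X + 2 * of_nat m + 1) * ?A"
    unfolding fixdim_poly_one_Suc by (simp add: algebra_simps)
  have "fixdim_poly r (\<lambda>_. 1) + fixdim_poly r (sign_char r) = 2 * ((?X + 2 * of_nat m + 1) * (?X + of_nat m + 1) * ?A)"
    unfolding r fixdim_poly_one_Suc[of "Suc m"] fixdim_poly_sign A1 by (simp add: algebra_simps)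
  hence half: "Polynomial.smult (1/2) (fixdim_poly r (\<lambda>_. 1) + fixdim_poly r (sign_char r))
      = (?X + 2 * of_nat m + 1) * (?X + of_nat m + 1) * ?A"
    by (simp add: numeral_poly)
  have fixed: "fixdim_poly r (\<lambda>x. of_nat (fixed_axes r x)) + fixdim_poly r (\<lambda>x. sign_char r x * of_nat (fixed_axes r x))
      = (of_nat m + 2) * ?X * ((?X + 2 * of_nat m + 1) + (?X - 1)) * ?A"
    unfolding r fixdim_poly_fixed_axes fixdim_poly_sign_fixed_axes fixdim_poly_sign A1 by (simp add: algebra_simps)
  have linear: "[:c, d:] = [:c:] + [:d:] * ?X" for c d :: rat
    by (rule poly_eqI) (simp add: coeff_pCons coeff_monom split: nat.split)
  have "(r - 1) * (2 * r - 3) = (m + 1) * (2 * m + 1)" "2 * r - 1 = 2 * m + 3" using r by simp_all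
  hence "[:of_nat ((r - 1) * (2 * r - 3)), of_nat (2 * r - 1):]
      = [:of_nat ((m + 1) * (2 * m + 1)):] + [:of_nat (2 * m + 3):] * ?X"
    unfolding linear by simp_all
  also have "\<dots> = (of_nat m + 1) * (2 * of_nat m + 1) + (2 * of_nat m + 3) * ?X"
    unfolding of_nat_poly[symmetric] by (simp only: of_nat_mult of_nat_add of_nat_1 of_nat_numeral)
  finally have lin: "[:of_nat ((r - 1) * (2 * r - 3)), of_nat (2 * r - 1):]
      = (of_nat m + 1) * (2 * of_nat m + 1) + (2 * of_nat m + 3) * ?X" .
  have "[:-1::rat:] = -1" by (simp add: one_pCons)
  hence lin1: "[:-1, 1:] = ?X - 1" by (subst linear) simp
  show ?thesis
    unfolding half fixed lin lin1 fixdim_poly_one[symmetric] m_def[symmetric] by (simp add: algebra_simps)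
qed

definition simple_refl_sperm :: "nat \<Rightarrow> nat \<Rightarrow> signed_perm" where
  "simple_refl_sperm r k = (if k < r then (transpose (k-1) k, \<lambda>_. 1)
     else (transpose (r-2) (r-1), \<lambda>i. if i = r-2 \<or> i = r-1 then -1 else 1))"

lemma simple_root_D_norm:
  assumes "1 \<le> k" "k \<le> r" "r \<ge> 2"
  shows "simple_root_D r k \<bullet> simple_root_D r k = 2"
proof -
  have "simple_root_D r k \<bullet> simple_root_D r k =
     (\<Sum>i\<in>{0..<r}. (if i = (if k < r then k - 1 else r - 2) then 1 else 0)
                   + (if i = (if k < r then k else r - 1) then 1 else 0))"
    unfolding scalar_prod_def simple_root_D_def using assms by (intro sum.cong) auto
  also have "\<dots> = 2" using assms by (cases "k < r") (simp_all add: sum.distrib)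
  finally show ?thesis .
qed

lemma reflection_simple_root:
  assumes "1 \<le> k" "k \<le> r" "r \<ge> 2"
  shows "reflection_mat r (simple_root_D r k) = sperm_mat r (simple_refl_sperm r k)"
proof (rule eq_matI)
  fix i j assume "i < dim_row (sperm_mat r (simple_refl_sperm r k))" "j < dim_col (sperm_mat r (simple_refl_sperm r k))"
  hence "i < r" "j < r" by auto
  thus "reflection_mat r (simple_root_D r k) $$ (i,j) = sperm_mat r (simple_refl_sperm r k) $$ (i,j)"
    unfolding reflection_mat_def simple_root_D_norm[OF assms] using assms
    by (cases "k < r") (auto simp: simple_root_D_def simple_refl_sperm_def transpose_def)
qed (auto simp: reflection_mat_def)

lemma simple_refl_sperm_even:
  assumes "m + 1 \<le> k" "k \<le> r" "m + 2 \<le> r"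
  shows "simple_refl_sperm r k \<in> even_sperms_fixing r m"
proof (cases "k < r")
  case True
  have "transpose (k-1) k permutes {..<r}" using True by (intro permutes_swap_id) auto
  thus ?thesis unfolding even_sperms_fixing_def simple_refl_sperm_def sperms_def using True assms
    by (auto simp: sign_char_def rat_sign_def transpose_def)
next
  case False
  have "transpose (r-2) (r-1) permutes {..<r}" using assms by (intro permutes_swap_id) auto
  moreover have "(\<Prod>i<r. rat_sign (if i = r-2 \<or> i = r-1 then -1 else 1)) = 1"
  proof -
    have "(\<Prod>i<r. rat_sign (if i = r-2 \<or> i = r-1 then -1 else 1)) =
      (\<Prod>i<r. (if i = r-2 then -1 else 1) * (if i = r-1 then -1 else 1) :: rat)"
      using assms by (intro prod.cong) (auto simp: rat_sign_def)
    also have "\<dots> = 1" using assms by (simp add: prod.distrib)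
    finally show ?thesis .
  qed
  ultimately show ?thesis unfolding even_sperms_fixing_def simple_refl_sperm_def sperms_def sign_char_def
    using False assms by (auto simp: transpose_def)
qed

section \<open>The reflection groups as groups of even signed permutations\<close>

lemma refl_group_carrier: "w \<in> refl_group r S \<Longrightarrow> w \<in> carrier_mat r r"
  by (induction rule: refl_group.induct) (auto simp: reflection_mat_def)

lemma refl_group_mult:
  assumes a: "a \<in> refl_group r S" and b: "b \<in> refl_group r S"
  shows "a * b \<in> refl_group r S"
  using a
proof (induction rule: refl_group.induct)
  case one
  thus ?case using b refl_group_carrier[OF b] by simp
next
  case (step w k)
  have "reflection_mat r (simple_root_D r k) * w * b = reflection_mat r (simple_root_D r k) * (w * b)"
    using refl_group_carrier[OF step.hyps(1)] refl_group_carrier[OF b]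
    by (intro assoc_mult_mat) (auto simp: reflection_mat_def)
  thus ?case using refl_group.step[OF step.IH step.hyps(2)] by simp
qed

lemma refl_group_subset_even_sperms:
  assumes "m + 2 \<le> r"
  shows "refl_group r {m+1..r} \<subseteq> sperm_mat r ` even_sperms_fixing r m"
proof
  fix w assume "w \<in> refl_group r {m+1..r}"
  thus "w \<in> sperm_mat r ` even_sperms_fixing r m"
  proof (induction rule: refl_group.induct)
    case one
    show ?case using sperm_mat_one[of r] sperm_one_even by (metis image_eqI)
  next
    case (step w k)
    then obtain y where y: "y \<in> even_sperms_fixing r m" and w: "w = sperm_mat r y" by auto
    have k: "m + 1 \<le> k" "k \<le> r" using step.hyps(2) by auto
    have g: "simple_refl_sperm r k \<in> even_sperms_fixing r m"
      using simple_refl_sperm_even k assms by simp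
    have "reflection_mat r (simple_root_D r k) = sperm_mat r (simple_refl_sperm r k)"
      by (rule reflection_simple_root) (use k assms in auto)
    hence "reflection_mat r (simple_root_D r k) * w = sperm_mat r (sperm_mult (simple_refl_sperm r k) y)"
      unfolding w using sperm_mat_mult even_sperms_fixing_sperms g y by simp
    thus ?case using sperm_mult_even[OF g y] by blast
  qed
qed

definition refl_sperms :: "nat \<Rightarrow> nat set \<Rightarrow> signed_perm set" where
  "refl_sperms r S = {x \<in> sperms r. sperm_mat r x \<in> refl_group r S}"

lemma sperm_mult_refl_sperms:
  assumes x: "x \<in> refl_sperms r S" and y: "y \<in> refl_sperms r S"
  shows "sperm_mult x y \<in> refl_sperms r S"
proof -
  have xs: "x \<in> sperms r" "sperm_mat r x \<in> refl_group r S"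
    and ys: "y \<in> sperms r" "sperm_mat r y \<in> refl_group r S"
    using x y unfolding refl_sperms_def by auto
  show ?thesis unfolding refl_sperms_def
    using sperm_mult_in_sperms[OF xs(1) ys(1)] refl_group_mult[OF xs(2) ys(2)] sperm_mat_mult[OF xs(1) ys(1)]
    by simp
qed

lemma sperm_one_refl_sperms: "sperm_one \<in> refl_sperms r S"
  unfolding refl_sperms_def using sperm_mat_one[of r] refl_group.one by auto

lemma simple_refl_sperm_refl_sperms:
  assumes "k \<in> S" "m + 1 \<le> k" "k \<le> r" "m + 2 \<le> r"
  shows "simple_refl_sperm r k \<in> refl_sperms r S"
proof -
  have "reflection_mat r (simple_root_D r k) * 1\<^sub>m r \<in> refl_group r S"
    by (rule refl_group.step[OF refl_group.one]) (use assms in auto)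
  moreover have "reflection_mat r (simple_root_D r k) = sperm_mat r (simple_refl_sperm r k)"
    by (rule reflection_simple_root) (use assms in auto)
  ultimately show ?thesis unfolding refl_sperms_def
    using assms simple_refl_sperm_even[of m k r] even_sperms_fixing_sperms by auto
qed

context
  fixes r m :: nat
  assumes rank: "m + 2 \<le> r"
begin

lemma transposition_refl_sperms:
  assumes "m \<le> a" "a < b" "b < r"
  shows "(transpose a b, \<lambda>_. 1) \<in> refl_sperms r {m+1..r}"
  using assms
proof (induction b)
  case 0
  thus ?case by simp
next
  case (Suc b)
  have adj: "(transpose c (Suc c), \<lambda>_. 1) \<in> refl_sperms r {m+1..r}" if "m \<le> c" "Suc c < r" for c
    using simple_refl_sperm_refl_sperms[of "Suc c" "{m+1..r}" m r] that rank
    unfolding simple_refl_sperm_def by simp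
  show ?case
  proof (cases "a = b")
    case True
    thus ?thesis using adj Suc.prems by simp
  next
    case False
    hence ab: "a < b" using Suc.prems by simp
    have "transpose a (Suc b) = transpose b (Suc b) \<circ> transpose a b \<circ> transpose b (Suc b)"
      using ab by (auto simp: fun_eq_iff transpose_def)
    hence "(transpose a (Suc b), \<lambda>_. 1) = sperm_mult (sperm_mult (transpose b (Suc b), \<lambda>_. 1)
        (transpose a b, \<lambda>_::nat. 1::real)) (transpose b (Suc b), \<lambda>_. 1)"
      by (simp add: sperm_mult_def)
    thus ?thesis using adj[of b] Suc ab by (simp add: sperm_mult_refl_sperms)
  qed
qed

lemma perm_refl_sperms:
  assumes "p permutes {m..<r}"
  shows "(p, \<lambda>_. 1) \<in> refl_sperms r {m+1..r}"
  using assms finite_atLeastLessThan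
proof (induction rule: permutes_induct)
  case id
  thus ?case using sperm_one_refl_sperms unfolding sperm_one_def id_def .
next
  case (swap a b p)
  have "(transpose a b, \<lambda>_. 1) \<in> refl_sperms r {m+1..r}"
    using swap transposition_refl_sperms[of a b] transposition_refl_sperms[of b a]
    by (cases a b rule: linorder_cases) (auto simp: transpose_commute)
  moreover have "(transpose a b \<circ> p, \<lambda>_::nat. 1::real) = sperm_mult (transpose a b, \<lambda>_. 1) (p, \<lambda>_. 1)"
    by (simp add: sperm_mult_def)
  ultimately show ?case using sperm_mult_refl_sperms[OF _ swap.IH] by metis
qed

text \<open>The sign changes of e_a and e_(r-1) generate all even sign changes on e_m, ..., e_(r-1).\<close>

lemma sign_pair_refl_sperms:
  assumes "m \<le> a" "a < r - 1"
  shows "(id, \<lambda>i. if i = a \<or> i = r-1 then -1 else 1) \<in> refl_sperms r {m+1..r}"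
proof -
  let ?N = "(id, \<lambda>i::nat. if i = r-2 \<or> i = r-1 then -1 else (1::real))"
  have N: "?N \<in> refl_sperms r {m+1..r}"
  proof -
    have eq: "sperm_mult (simple_refl_sperm r r) (simple_refl_sperm r (r-1)) = ?N"
      unfolding simple_refl_sperm_def sperm_mult_def using rank by (auto simp: fun_eq_iff transpose_def)
    have "simple_refl_sperm r r \<in> refl_sperms r {m+1..r}"
      by (rule simple_refl_sperm_refl_sperms) (use rank in auto)
    moreover have "simple_refl_sperm r (r-1) \<in> refl_sperms r {m+1..r}"
      by (rule simple_refl_sperm_refl_sperms) (use rank in auto)
    ultimately show ?thesis unfolding eq[symmetric] by (rule sperm_mult_refl_sperms)
  qed
  show ?thesis
  proof (cases "a = r - 2")
    case True
    thus ?thesis using N by simp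
  next
    case False
    hence a2: "a < r - 2" using assms by simp
    let ?t = "(transpose a (r-2), \<lambda>_::nat. 1::real)"
    have t: "?t \<in> refl_sperms r {m+1..r}" using transposition_refl_sperms[of a "r-2"] a2 assms rank by simp
    have "sperm_mult ?t (sperm_mult ?N ?t) = (id, \<lambda>i. if i = a \<or> i = r-1 then -1 else 1)"
      unfolding sperm_mult_def using a2 rank by (auto simp: fun_eq_iff transpose_def)
    thus ?thesis using sperm_mult_refl_sperms[OF t sperm_mult_refl_sperms[OF N t]] by simp
  qed
qed

lemma sign_pair_even:
  assumes a: "m \<le> a" "a < r - 1"
  shows "(id, \<lambda>i. if i = a \<or> i = r-1 then -1 else 1) \<in> even_sperms_fixing r m"
proof -
  have "(\<Prod>i<r. rat_sign (if i = a \<or> i = r-1 then -1 else 1))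
      = (\<Prod>i<r. (if i = a then -1 else 1) * (if i = r-1 then -1 else 1) :: rat)"
    using a by (intro prod.cong) (auto simp: rat_sign_def)
  also have "\<dots> = 1" using a rank by (simp add: prod.distrib)
  finally show ?thesis unfolding even_sperms_fixing_def sperms_def sign_char_def
    using a rank by (auto simp: permutes_id)
qed

lemma even_signs_trivial:
  assumes even: "(id, s) \<in> even_sperms_fixing r m" and low: "\<And>i. m \<le> i \<Longrightarrow> i < r - 1 \<Longrightarrow> s i = 1"
  shows "s = (\<lambda>_. 1)"
proof -
  have s: "(id, s) \<in> sperms r" "(\<Prod>i<r. rat_sign (s i)) = 1" "\<forall>i<m. s i = 1"
    using even unfolding even_sperms_fixing_def sign_char_def by (simp_all add: id_def)
  have below: "s i = 1" if "i < r - 1" for i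
    using low[of i] s(3) that by (cases "i < m") auto
  have "(\<Prod>i<r. rat_sign (s i)) = (\<Prod>i<r-1. rat_sign (s i)) * rat_sign (s (r-1))"
    using rank prod.lessThan_Suc[of "\<lambda>i. rat_sign (s i)" "r - 1"] by simp
  also have "(\<Prod>i<r-1. rat_sign (s i)) = 1" using below by (simp add: rat_sign_def)
  finally have "s (r-1) = 1" using s(2) by (auto simp: rat_sign_def split: if_splits)
  hence "s i = 1" for i
    using below[of i] sperms_D(3)[OF s(1), of i] by (cases "i < r - 1"; cases "i = r - 1") auto
  thus ?thesis by auto
qed

lemma sign_change_refl_sperms:
  assumes "(id, s) \<in> even_sperms_fixing r m"
  shows "(id, s) \<in> refl_sperms r {m+1..r}"
proof -
  define k where "k = card {i. m \<le> i \<and> i < r - 1 \<and> s i = -1}"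
  from k_def assms show ?thesis
  proof (induction k arbitrary: s)
    case 0
    have "s i = 1" if "m \<le> i" "i < r - 1" for i
    proof -
      have "(id, s) \<in> sperms r" using "0.prems"(2) by (rule even_sperms_fixing_sperms)
      thus ?thesis using "0.prems"(1) sperms_D(2)[of "(id, s)" r i] that by auto
    qed
    hence "s = (\<lambda>_. 1)" using even_signs_trivial[OF "0.prems"(2)] by blast
    thus ?case using sperm_one_refl_sperms unfolding sperm_one_def by (simp add: id_def)
  next
    case (Suc k)
    let ?A = "{i. m \<le> i \<and> i < r - 1 \<and> s i = -1}"
    obtain a where aA: "a \<in> ?A" using Suc.prems(1) by (metis card.empty ex_in_conv nat.distinct(1))
    have a: "m \<le> a" "a < r - 1" "s a = -1" using aA by auto
    define u where "u = (\<lambda>i::nat. if i = a \<or> i = r-1 then -1 else (1::real))"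
    define s' where "s' = (\<lambda>i. u i * s i)"
    have prod: "sperm_mult (id, u) (id, s) = (id, s')" unfolding sperm_mult_def s'_def by simp
    have ids': "(id, s') \<in> even_sperms_fixing r m"
      unfolding prod[symmetric] using sign_pair_even[OF a(1,2)] unfolding u_def[symmetric]
      by (rule sperm_mult_even[OF _ Suc.prems(2)])
    have "{i. m \<le> i \<and> i < r - 1 \<and> s' i = -1} = ?A - {a}"
      unfolding s'_def u_def using a by auto
    hence "card {i. m \<le> i \<and> i < r - 1 \<and> s' i = -1} = k"
      using Suc.prems(1) aA by simp
    hence "(id, s') \<in> refl_sperms r {m+1..r}" using Suc.IH ids' by blast
    moreover have "(id, u) \<in> refl_sperms r {m+1..r}"
      using sign_pair_refl_sperms[OF a(1,2)] unfolding u_def .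
    moreover have "sperm_mult (id, u) (id, s') = (id, s)"
      unfolding sperm_mult_def s'_def u_def by (auto simp: fun_eq_iff)
    ultimately show ?case using sperm_mult_refl_sperms by metis
  qed
qed

lemma even_sperms_refl_sperms:
  assumes x: "x \<in> even_sperms_fixing r m"
  shows "x \<in> refl_sperms r {m+1..r}"
proof -
  have xs: "x \<in> sperms r" and fx: "\<forall>i<m. fst x i = i \<and> snd x i = 1"
    using x unfolding even_sperms_fixing_def by auto
  have "fst x permutes {m..<r}"
    by (rule permutes_superset[OF sperms_D(1)[OF xs]]) (use fx in auto)
  hence "(fst x, \<lambda>_. 1) \<in> refl_sperms r {m+1..r}" by (rule perm_refl_sperms)
  moreover have "(id, snd x) \<in> even_sperms_fixing r m"
    using x sperms_D(2,3)[OF xs] unfolding even_sperms_fixing_def sperms_def sign_char_def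
    by (auto simp: permutes_id)
  hence "(id, snd x) \<in> refl_sperms r {m+1..r}" by (rule sign_change_refl_sperms)
  moreover have "sperm_mult (fst x, \<lambda>_. 1) (id, snd x) = x" unfolding sperm_mult_def by simp
  ultimately show ?thesis using sperm_mult_refl_sperms by metis
qed

end

lemma refl_group_eq_even_sperms:
  assumes "m + 2 \<le> r"
  shows "refl_group r {m+1..r} = sperm_mat r ` even_sperms_fixing r m"
proof
  show "refl_group r {m+1..r} \<subseteq> sperm_mat r ` even_sperms_fixing r m"
    by (rule refl_group_subset_even_sperms[OF assms])
  show "sperm_mat r ` even_sperms_fixing r m \<subseteq> refl_group r {m+1..r}"
    using even_sperms_refl_sperms[OF assms] unfolding refl_sperms_def by auto
qed

lemma weyl_D_eq: "r \<ge> 2 \<Longrightarrow> weyl_D r = sperm_mat r ` even_sperms_fixing r 0"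
  using refl_group_eq_even_sperms[of 0 r] unfolding weyl_D_def by simp

lemma parabolic_D1_eq: "r \<ge> 3 \<Longrightarrow> parabolic_D1 r = sperm_mat r ` even_sperms_fixing r 1"
  using refl_group_eq_even_sperms[of 1 r] unfolding parabolic_D1_def by (simp add: numeral_2_eq_2)

section \<open>Cosets of the parabolic subgroup\<close>

text \<open>A signed axis (i, c) stands for the vector c \<cdot> e_i. The left coset of
  W(\<Delta> - {\<alpha>_1}) containing w consists of the elements that send e_0 to the same signed axis as w.\<close>

definition axis_image :: "signed_perm \<Rightarrow> nat \<times> real" where
  "axis_image x = (fst x 0, snd x 0)"

definition sperm_act :: "signed_perm \<Rightarrow> nat \<times> real \<Rightarrow> nat \<times> real" where
  "sperm_act x k = (fst x (fst k), snd x (fst k) * snd k)"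

definition signed_axes :: "nat \<Rightarrow> (nat \<times> real) set" where
  "signed_axes r = {(i, c). i < r \<and> (c = 1 \<or> c = -1)}"

definition axis_fibre :: "nat \<Rightarrow> nat \<times> real \<Rightarrow> signed_perm set" where
  "axis_fibre r k = {z \<in> even_sperms_fixing r 0. axis_image z = k}"

definition axis_coset :: "nat \<Rightarrow> nat \<times> real \<Rightarrow> real mat set" where
  "axis_coset r k = sperm_mat r ` axis_fibre r k"

lemma axis_image_mult: "axis_image (sperm_mult x y) = sperm_act x (axis_image y)"
  unfolding axis_image_def sperm_act_def sperm_mult_def by simp

lemma sperm_act_inv:
  assumes x: "x \<in> sperms r" and k: "fst k < r"
  shows "sperm_act (sperm_inv x) (sperm_act x k) = k"
  unfolding sperm_act_def sperm_inv_def
  using permutes_inverses(2)[OF sperms_D(1)[OF x]] sperms_D(6)[OF x]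
  by (simp add: mult.assoc[symmetric] prod_eq_iff)

lemma sperm_act_signed_axes:
  assumes x: "x \<in> sperms r" and k: "k \<in> signed_axes r"
  shows "sperm_act x k \<in> signed_axes r"
proof -
  obtain i c where "k = (i, c)" "i < r" "c = 1 \<or> c = -1" using k unfolding signed_axes_def by auto
  thus ?thesis using sperms_D(2,5)[OF x, of i] unfolding signed_axes_def sperm_act_def by auto
qed

lemma axis_image_signed_axes: "r \<ge> 1 \<Longrightarrow> x \<in> sperms r \<Longrightarrow> axis_image x \<in> signed_axes r"
  using sperms_D(2,5)[of x r 0] unfolding signed_axes_def axis_image_def by auto

lemma axis_fibre_nonempty:
  assumes r: "r \<ge> 2" and k: "k \<in> signed_axes r"
  shows "axis_fibre r k \<noteq> {}"
proof -
  obtain i c where kic: "k = (i, c)" and i: "i < r" and c: "c = 1 \<or> c = -1"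
    using k unfolding signed_axes_def by auto
  define z where "z = (transpose 0 i, \<lambda>j::nat. if j = 0 \<or> j = 1 then c else 1)"
  have "z \<in> sperms r" unfolding z_def sperms_def using c i r by (auto intro: permutes_swap_id)
  moreover have "sign_char r z = 1"
  proof -
    have "sign_char r z = (\<Prod>j<r. (if j = 0 then rat_sign c else 1) * (if j = 1 then rat_sign c else 1))"
      unfolding sign_char_def z_def by (intro prod.cong) (auto simp: rat_sign_def)
    also have "\<dots> = 1" using r c by (auto simp: prod.distrib rat_sign_def)
    finally show ?thesis .
  qed
  moreover have "axis_image z = k" unfolding axis_image_def z_def kic by simp
  ultimately show ?thesis unfolding axis_fibre_def even_sperms_fixing_def by blast
qed

lemma even_sperms_fixing_1: "even_sperms_fixing r 1 = axis_fibre r (0, 1)"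
  unfolding even_sperms_fixing_def axis_fibre_def axis_image_def by auto

lemma mult_axis_fibre:
  assumes x: "x \<in> even_sperms_fixing r 0" and k: "fst k < r"
  shows "sperm_mult x ` axis_fibre r k = axis_fibre r (sperm_act x k)"
proof
  show "sperm_mult x ` axis_fibre r k \<subseteq> axis_fibre r (sperm_act x k)"
    using sperm_mult_even[OF x] unfolding axis_fibre_def by (auto simp: axis_image_mult)
  show "axis_fibre r (sperm_act x k) \<subseteq> sperm_mult x ` axis_fibre r k"
  proof
    fix z assume z: "z \<in> axis_fibre r (sperm_act x k)"
    let ?y = "sperm_mult (sperm_inv x) z"
    have xs: "x \<in> sperms r" using x by (rule even_sperms_fixing_sperms)
    have "?y \<in> axis_fibre r k"
      using sperm_mult_even[OF sperm_inv_even[OF x]] z sperm_act_inv[OF xs k]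
      unfolding axis_fibre_def by (auto simp: axis_image_mult)
    moreover have "z = sperm_mult x ?y"
      by (simp add: sperm_mult_assoc[symmetric] sperm_mult_inv(2)[OF xs])
    ultimately show "z \<in> sperm_mult x ` axis_fibre r k" by blast
  qed
qed

lemma image_mult_sperm_mat:
  assumes x: "x \<in> sperms r" and A: "A \<subseteq> sperms r"
  shows "(\<lambda>h. sperm_mat r x * h) ` (sperm_mat r ` A) = sperm_mat r ` (sperm_mult x ` A)"
proof -
  have "(\<lambda>h. sperm_mat r x * h) ` (sperm_mat r ` A) = (\<lambda>y. sperm_mat r (sperm_mult x y)) ` A"
    unfolding image_image using sperm_mat_mult[OF x] A by (intro image_cong) auto
  thus ?thesis by (simp add: image_image)
qed

lemma axis_fibre_sperms: "axis_fibre r k \<subseteq> sperms r"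
  unfolding axis_fibre_def using even_sperms_fixing_sperms by auto

lemma mult_axis_coset:
  assumes x: "x \<in> even_sperms_fixing r 0" and k: "fst k < r"
  shows "(\<lambda>h. sperm_mat r x * h) ` axis_coset r k = axis_coset r (sperm_act x k)"
  unfolding axis_coset_def image_mult_sperm_mat[OF even_sperms_fixing_sperms[OF x] axis_fibre_sperms]
    mult_axis_fibre[OF x k] ..

lemma left_coset_eq_axis_coset:
  assumes r: "r \<ge> 3" and x: "x \<in> even_sperms_fixing r 0"
  shows "(\<lambda>h. sperm_mat r x * h) ` parabolic_D1 r = axis_coset r (axis_image x)"
proof -
  have "parabolic_D1 r = axis_coset r (0, 1)"
    unfolding parabolic_D1_eq[OF r] even_sperms_fixing_1 axis_coset_def ..
  moreover have "sperm_act x (0, 1) = axis_image x" unfolding sperm_act_def axis_image_def by simp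
  ultimately show ?thesis using mult_axis_coset[OF x, of "(0, 1)"] r by simp
qed

lemma inj_on_axis_coset:
  assumes r: "r \<ge> 2"
  shows "inj_on (axis_coset r) (signed_axes r)"
proof (rule inj_onI)
  fix k k' assume k: "k \<in> signed_axes r" and "k' \<in> signed_axes r" and eq: "axis_coset r k = axis_coset r k'"
  obtain z where z: "z \<in> axis_fibre r k" using axis_fibre_nonempty[OF r k] by blast
  hence "sperm_mat r z \<in> axis_coset r k'" using eq unfolding axis_coset_def by auto
  then obtain z' where z': "z' \<in> axis_fibre r k'" "sperm_mat r z = sperm_mat r z'"
    unfolding axis_coset_def by auto
  have "z = z'"
    by (rule inj_onD[OF inj_on_sperm_mat z'(2)]) (use z z'(1) axis_fibre_sperms in blast)+
  thus "k = k'" using z z'(1) unfolding axis_fibre_def by simp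
qed

lemma left_cosets_D1_eq:
  assumes r: "r \<ge> 3"
  shows "left_cosets_D1 r = axis_coset r ` signed_axes r"
proof
  show "left_cosets_D1 r \<subseteq> axis_coset r ` signed_axes r"
  proof
    fix C assume "C \<in> left_cosets_D1 r"
    then obtain g where g: "g \<in> weyl_D r" and C: "C = (\<lambda>h. g * h) ` parabolic_D1 r"
      unfolding left_cosets_D1_def by blast
    obtain x where x: "x \<in> even_sperms_fixing r 0" and gx: "g = sperm_mat r x"
      using g weyl_D_eq[of r] r by auto
    have "C = axis_coset r (axis_image x)" unfolding C gx by (rule left_coset_eq_axis_coset[OF r x])
    moreover have "axis_image x \<in> signed_axes r"
      using axis_image_signed_axes even_sperms_fixing_sperms[OF x] r by simp
    ultimately show "C \<in> axis_coset r ` signed_axes r" by blast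
  qed
  show "axis_coset r ` signed_axes r \<subseteq> left_cosets_D1 r"
  proof
    fix C assume "C \<in> axis_coset r ` signed_axes r"
    then obtain k where k: "k \<in> signed_axes r" and C: "C = axis_coset r k" by blast
    obtain z where z: "z \<in> axis_fibre r k" using axis_fibre_nonempty[OF _ k] r by fastforce
    have zE: "z \<in> even_sperms_fixing r 0" and kz: "axis_image z = k" using z unfolding axis_fibre_def by auto
    have "C = (\<lambda>h. sperm_mat r z * h) ` parabolic_D1 r" unfolding C left_coset_eq_axis_coset[OF r zE] kz ..
    moreover have "sperm_mat r z \<in> weyl_D r" using weyl_D_eq[of r] r zE by auto
    ultimately show "C \<in> left_cosets_D1 r" unfolding left_cosets_D1_def by blast
  qed
qed

text \<open>The fixed cosets correspond to the signed axes \<plusminus>e_i with x e_i = e_i.\<close>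

lemma card_fixed_left_cosets:
  assumes r: "r \<ge> 3" and x: "x \<in> even_sperms_fixing r 0"
  shows "card {C \<in> left_cosets_D1 r. (\<lambda>h. sperm_mat r x * h) ` C = C} = 2 * fixed_axes r x"
proof -
  let ?K = "{k \<in> signed_axes r. sperm_act x k = k}"
  have inj: "inj_on (axis_coset r) (signed_axes r)" using inj_on_axis_coset r by simp
  have "{C \<in> left_cosets_D1 r. (\<lambda>h. sperm_mat r x * h) ` C = C} = axis_coset r ` ?K"
  proof -
    have xs: "x \<in> sperms r" using x by (rule even_sperms_fixing_sperms)
    have "(\<lambda>h. sperm_mat r x * h) ` axis_coset r k = axis_coset r k \<longleftrightarrow> sperm_act x k = k"
      if k: "k \<in> signed_axes r" for k
    proof -
      have "fst k < r" using k unfolding signed_axes_def by auto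
      thus ?thesis
        using mult_axis_coset[OF x] inj_on_eq_iff[OF inj sperm_act_signed_axes[OF xs k] k] by simp
    qed
    thus ?thesis unfolding left_cosets_D1_eq[OF r] by auto
  qed
  moreover have "inj_on (axis_coset r) ?K" by (rule inj_on_subset[OF inj]) auto
  moreover have "?K = {i. i < r \<and> fst x i = i \<and> snd x i = 1} \<times> {1, -1}"
    unfolding signed_axes_def sperm_act_def by auto
  ultimately show ?thesis by (simp add: card_image card_cartesian_product fixed_axes_def)
qed

lemma chi_sigma_S1_sperm:
  assumes "r \<ge> 3" and "x \<in> even_sperms_fixing r 0"
  shows "chi_sigma_S1 r (sperm_mat r x) = 2 * int (fixed_axes r x) - 1"
  unfolding chi_sigma_S1_def card_fixed_left_cosets[OF assms] by simp

theorem proposition4p4: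
  fixes r :: nat
  assumes "r \<ge> 4"
  shows "card (weyl_D r) = 2 ^ (r - 1) * fact r
    \<and> P_S1 r = Polynomial.smult (1 / of_nat (card (weyl_D r)))
        ([:-1, 1:] * [:of_nat ((r - 1) * (2 * r - 3)), of_nat (2 * r - 1):]
         * (\<Prod>a = 1..r - 2. [:of_nat (2 * a - 1), 1:]))"
proof -
  let ?E = "even_sperms_fixing r 0"
  have W: "weyl_D r = sperm_mat r ` ?E" using weyl_D_eq assms by simp
  have inj: "inj_on (sperm_mat r) ?E"
    using inj_on_sperm_mat by (rule inj_on_subset) (auto simp: even_sperms_fixing_sperms)
  have "(\<Sum>w\<in>weyl_D r. Polynomial.smult (of_int (chi_sigma_S1 r w)) (monom 1 (fixdim r w)) :: rat poly)
      = (\<Sum>x\<in>?E. monom (2 * of_nat (fixed_axes r x) - 1) (fixdim r (sperm_mat r x)))"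
    unfolding W sum.reindex[OF inj]
    using assms by (intro sum.cong) (simp_all add: chi_sigma_S1_sperm smult_monom)
  also have "\<dots> = [:-1, 1:] * [:of_nat ((r - 1) * (2 * r - 3)), of_nat (2 * r - 1):]
         * (\<Prod>a = 1..r - 2. [:of_nat (2 * a - 1), 1:])"
    unfolding fixdim_poly_even using assms by (simp add: fixdim_poly_even_closed)
  finally show ?thesis
    unfolding P_S1_def W card_image[OF inj] using card_even_sperms assms by simp
qed

end
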